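(* For every $n\ge2$, \[ \mathrm{FC}(B_n)=\biguplus_{\pi\in \mathrm{FC}(S_n)} B_n(\pi)\cdot\pi , \] a disjoint union, where $B_n(\pi)\cdot\pi=\{\mu\pi\mid \mu\in B_n(\pi)\}$ and \[ B_n(\pi):=\begin{cases}\{\mu_1\mu_2\cdots\mu_{v(\pi)} \mid \mu_i\in\{e,\delta_i\}\ \text{for each } i\} & \text{if } 1\notin \mathrm{Des}(\pi^{-1}),\\ \{e,\delta_1,\delta_2,\ldots,\delta_{v(\pi)}\} & \text{if } 1\in\mathrm{Des}(\pi^{-1}).\end{cases} \]
   Context: $B_n$ is the group of signed permutations of $\{\pm1,\ldots,\pm n\}$, composed as functions ($(uv)(i)=u(v(i))$), with Coxeter generators $s_0=[-1,2,\ldots,n]$ and $s_i=[1,\ldots,i-1,i+1,i,i+2,\ldots,n]$ ($1\le i\le n-1$); $e$ is the identity. An element is fully commutative (FC) if any reduced expression can be obtained from any other using only commutation relations between commuting generators. $\mathrm{FC}(B_n)$ is the set of FC elements of $B_n$; $\mathrm{FC}(S_n)=\mathrm{FC}(B_n)\cap S_n$ (the $321$-avoiding permutations of $[n]$). For $\sigma\in S_n$, $\mathrm{Des}(\sigma)=\{1\le i\le n-1\mid \sigma_i>\sigma_{i+1}\}$. For $1\le i\le n$, $\delta_i:=s_{i-1}s_{i-2}\cdots s_1s_0$ (so $\delta_1=s_0$). The first valley of $\pi\in\mathrm{FC}(S_n)$ is $v(\pi):=\min(\mathrm{Des}(\pi^{-1})\setminus\{1\})$ if $\mathrm{Des}(\pi^{-1})\setminus\{1\}\neq\emptyset$,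 and $v(\pi):=n$ otherwise. *)

theory Defs
  imports Main
begin

text \<open>Signed permutations of {+-1,...,+-n} are represented as functions int => int
  that are bijective, odd (w(-i) = -w(i)), and the identity outside {+-1,...,+-n}.
  Product: (u v)(i) = u(v(i)), i.e. u v = u o v.\<close>

definition signed_perms :: "nat \<Rightarrow> (int \<Rightarrow> int) set" where
  "signed_perms n = {w. bij w \<and> (\<forall>i. w (- i) = - w i) \<and>
      (\<forall>i. \<not> (0 < \<bar>i\<bar> \<and> \<bar>i\<bar> \<le> int n) \<longrightarrow> w i = i)}"

definition gen :: "nat \<Rightarrow> int \<Rightarrow> int" where
  "gen k = (if k = 0 then (\<lambda>i. if i = 1 then -1 else if i = -1 then 1 else i)
     else (\<lambda>i. if i = int k then int k + 1 else if i = int k + 1 then int k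
               else if i = - int k then - (int k + 1) else if i = - (int k + 1) then - int k
               else i))"

definition word_eval :: "nat list \<Rightarrow> int \<Rightarrow> int" where
  "word_eval ws = foldr (\<lambda>k f. gen k \<circ> f) ws id"

definition words :: "nat \<Rightarrow> nat list set" where
  "words n = {ws. set ws \<subseteq> {0..<n}}"

definition coxeter_length :: "nat \<Rightarrow> (int \<Rightarrow> int) \<Rightarrow> nat" where
  "coxeter_length n w = (LEAST k. \<exists>ws \<in> words n. length ws = k \<and> word_eval ws = w)"

definition reduced_word :: "nat \<Rightarrow> (int \<Rightarrow> int) \<Rightarrow> nat list \<Rightarrow> bool" where
  "reduced_word n w ws \<longleftrightarrow> ws \<in> words n \<and> word_eval ws = w \<and> length ws = coxeter_length n w"

definition comm_step :: "(nat list \<times> nat list) set" where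
  "comm_step = {(xs @ [a, b] @ ys, xs @ [b, a] @ ys) | xs a b ys. gen a \<circ> gen b = gen b \<circ> gen a}"

definition FC_B :: "nat \<Rightarrow> (int \<Rightarrow> int) set" where
  "FC_B n = {w \<in> signed_perms n. \<forall>u v. reduced_word n w u \<and> reduced_word n w v \<longrightarrow> (u, v) \<in> comm_step\<^sup>*}"

definition FC_S :: "nat \<Rightarrow> (int \<Rightarrow> int) set" where
  "FC_S n = {w \<in> FC_B n. \<forall>i. 1 \<le> i \<and> i \<le> int n \<longrightarrow> w i > 0}"

definition Des_inv :: "nat \<Rightarrow> (int \<Rightarrow> int) \<Rightarrow> int set" where
  "Des_inv n \<pi> = {i. 1 \<le> i \<and> i \<le> int n - 1 \<and> inv \<pi> i > inv \<pi> (i + 1)}"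

definition first_valley :: "nat \<Rightarrow> (int \<Rightarrow> int) \<Rightarrow> nat" where
  "first_valley n \<pi> = (if Des_inv n \<pi> - {1} \<noteq> {} then nat (Min (Des_inv n \<pi> - {1})) else n)"

definition delta :: "nat \<Rightarrow> int \<Rightarrow> int" where
  "delta i = word_eval (rev [0..<i])"

definition B_pi :: "nat \<Rightarrow> (int \<Rightarrow> int) \<Rightarrow> (int \<Rightarrow> int) set" where
  "B_pi n \<pi> = (let v = first_valley n \<pi> in
     if 1 \<notin> Des_inv n \<pi>
     then {foldr (\<lambda>i f. (if i \<in> S then delta i else id) \<circ> f) [1..<v+1] id | S. S \<subseteq> {1..v}}
     else insert id (delta ` {1..v}))"

end

theory Submission
  imports Defs
begin

text \<open>
  Every signed permutation factors uniquely as \<open>w = \<delta>\<^sub>N \<pi>\<close> with \<open>\<pi>\<close> unsigned, where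
  \<open>\<delta>\<^sub>N = \<Prod>\<^sub>i\<^sub>\<in>\<^sub>N \<delta>\<^sub>i\<close> is the unique signed permutation that is increasing on
  \<open>1, \<dots>, n\<close> and whose negative values are the \<open>-j\<close>, \<open>j \<in> N\<close>. The Coxeter length of \<open>w\<close> is
  \<open>\<Sum>N + inv(\<pi>\<^sup>-\<^sup>1)\<close>, and a generator acts on the pair \<open>(N, \<pi>)\<close> in one of three ways:
  \<open>s\<^sub>0\<close> toggles \<open>1 \<in> N\<close>; \<open>s\<^sub>k\<close> trades \<open>k\<close> and \<open>k + 1\<close> when exactly one of them lies in
  \<open>N\<close>; otherwise \<open>s\<^sub>k\<close> commutes past \<open>\<delta>\<^sub>N\<close> and acts on \<open>\<pi>\<close> by an adjacent swap.

  Fully commutative elements are characterised recursively: \<open>w\<close> is FC iff \<open>s\<^sub>a w\<close> is FC for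
  every left descent \<open>s\<^sub>a\<close> and no two left descents fail to commute. Using the three cases above
  one checks that the condition "\<open>\<pi>\<^sup>-\<^sup>1\<close> avoids 321, \<open>N \<subseteq> {1..v(\<pi>)}\<close>, and
  \<open>|N| \<le> 1\<close> if \<open>1 \<in> Des(\<pi>\<^sup>-\<^sup>1)\<close>" obeys the same recursion, so it characterises
  FC elements; since \<open>B\<^sub>n(\<pi>)\<close> is exactly the set of such \<open>\<delta>\<^sub>N\<close>, this is the theorem.
\<close>

section \<open>Signed permutations and the Coxeter generators\<close>

lemma signed_permsD:
  assumes "w \<in> signed_perms n"
  shows "bij w" "w (- i) = - w i" "\<not> (0 < \<bar>i\<bar> \<and> \<bar>i\<bar> \<le> int n) \<Longrightarrow> w i = i"
  using assms unfolding signed_perms_def by auto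

lemma signed_perms_inj_eq: "w \<in> signed_perms n \<Longrightarrow> w x = w y \<longleftrightarrow> x = y"
  using signed_permsD(1) bij_is_inj inj_eq by metis

lemma signed_perms_abs_bound:
  assumes "w \<in> signed_perms n" "0 < \<bar>i\<bar>" "\<bar>i\<bar> \<le> int n"
  shows "0 < \<bar>w i\<bar> \<and> \<bar>w i\<bar> \<le> int n"
proof (rule ccontr)
  assume "\<not> ?thesis"
  then have "w (w i) = w i" using signed_permsD(3)[OF assms(1), of "w i"] by auto
  then have "w i = i" using signed_perms_inj_eq[OF assms(1)] by simp
  then show False using \<open>\<not> (0 < \<bar>w i\<bar> \<and> \<bar>w i\<bar> \<le> int n)\<close> assms by auto
qed

lemma signed_perms_comp: "u \<in> signed_perms n \<Longrightarrow> v \<in> signed_perms n \<Longrightarrow> u \<circ> v \<in> signed_perms n"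
  unfolding signed_perms_def by (auto intro: bij_comp)

lemma id_signed_perms: "id \<in> signed_perms n"
  unfolding signed_perms_def by auto

lemma inv_signed_perms: assumes "w \<in> signed_perms n" shows "inv w \<in> signed_perms n"
proof -
  have b: "bij w" using signed_permsD(1)[OF assms] .
  have "inv w (- i) = - inv w i" for i
  proof -
    have "w (inv w i) = i" using b by (meson bij_inv_eq_iff)
    then have "w (- inv w i) = - i" using signed_permsD(2)[OF assms, of "inv w i"] by simp
    then show ?thesis using b by (metis bij_inv_eq_iff)
  qed
  moreover have "\<not> (0 < \<bar>i\<bar> \<and> \<bar>i\<bar> \<le> int n) \<Longrightarrow> inv w i = i" for i
    using signed_permsD(3)[OF assms, of i] b by (metis bij_inv_eq_iff)
  ultimately show ?thesis using b unfolding signed_perms_def by (auto intro: bij_imp_bij_inv)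
qed

lemma signed_perms_inv_app: "w \<in> signed_perms n \<Longrightarrow> w (inv w x) = x" "w \<in> signed_perms n \<Longrightarrow> inv w (w x) = x"
  using signed_permsD(1) bij_inv_eq_iff by metis+

lemma signed_perms_eqI:
  assumes "u \<in> signed_perms n" "v \<in> signed_perms n" "\<And>i. 1 \<le> i \<Longrightarrow> i \<le> int n \<Longrightarrow> u i = v i"
  shows "u = v"
proof
  fix i
  show "u i = v i"
  proof (cases "0 < \<bar>i\<bar> \<and> \<bar>i\<bar> \<le> int n")
    case True
    show ?thesis
    proof (cases "i > 0")
      case True then show ?thesis using assms(3) \<open>0 < \<bar>i\<bar> \<and> \<bar>i\<bar> \<le> int n\<close> by auto
    next
      case False
      then have "u (- i) = v (- i)" using assms(3)[of "-i"] True by auto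
      then show ?thesis using signed_permsD(2)[OF assms(1), of "-i"] signed_permsD(2)[OF assms(2), of "-i"] by simp
    qed
  next
    case False then show ?thesis using signed_permsD(3)[OF assms(1)] signed_permsD(3)[OF assms(2)] by auto
  qed
qed

lemma gen_0_apply: "gen 0 x = (if x = 1 then -1 else if x = -1 then 1 else x)"
  by (simp add: gen_def)

lemma gen_apply: "k \<ge> 1 \<Longrightarrow> gen k x = (if x = int k then int k + 1 else if x = int k + 1 then int k
               else if x = - int k then - (int k + 1) else if x = - (int k + 1) then - int k
               else x)"
  by (simp add: gen_def)

lemma gen_gen: "gen a (gen a x) = x"
  by (cases "a = 0") (auto simp: gen_0_apply gen_apply)

lemma gen_comp_gen: "gen a \<circ> gen a = id"
  using gen_gen by auto

lemma gen_bij: "bij (gen a)"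
  by (metis bij_betw_imageI gen_gen inj_on_inverseI surj_def)

lemma gen_inv: "inv (gen a) = gen a"
  by (metis gen_comp_gen inv_unique_comp)

lemma gen_signed_perms: "a < n \<Longrightarrow> gen a \<in> signed_perms n"
  unfolding signed_perms_def using gen_bij
  by (cases "a = 0") (auto simp: gen_0_apply gen_apply)

lemma word_eval_Nil: "word_eval [] = id" by (simp add: word_eval_def)

lemma word_eval_Cons: "word_eval (a # ws) = gen a \<circ> word_eval ws" by (simp add: word_eval_def)

lemma word_eval_signed_perms: "ws \<in> words n \<Longrightarrow> word_eval ws \<in> signed_perms n"
  by (induction ws) (auto simp: words_def word_eval_Nil word_eval_Cons id_signed_perms intro: signed_perms_comp gen_signed_perms)

lemma gen_commute: "a + 2 \<le> b \<Longrightarrow> gen a \<circ> gen b = gen b \<circ> gen a"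
  by (rule ext) (cases "a = 0"; auto simp: gen_0_apply gen_apply)

lemma gen_Suc_not_commute: "gen a \<circ> gen (a+1) \<noteq> gen (a+1) \<circ> gen a"
proof
  assume h: "gen a \<circ> gen (a+1) = gen (a+1) \<circ> gen a"
  show False
  proof (cases "a = 0")
    case True
    then show False using fun_cong[OF h, of 1] by (simp add: gen_0_apply gen_apply)
  next
    case False
    then show False using fun_cong[OF h, of "int a"] by (simp add: gen_apply)
  qed
qed

lemma delta_Suc: "delta (Suc j) = gen j \<circ> delta j"
  by (simp add: delta_def word_eval_def)

lemma delta_apply: "j \<ge> 1 \<Longrightarrow> delta j x = (if x = 1 then - int j else if 2 \<le> x \<and> x \<le> int j then x - 1
   else if x = -1 then int j else if - int j \<le> x \<and> x \<le> -2 then x + 1 else x)"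
proof (induction j arbitrary: x)
  case 0 then show ?case by simp
next
  case (Suc j)
  show ?case
  proof (cases "j = 0")
    case True then show ?thesis by (simp add: delta_Suc delta_def word_eval_def gen_0_apply)
  next
    case False
    then have IH: "delta j y = (if y = 1 then - int j else if 2 \<le> y \<and> y \<le> int j then y - 1
      else if y = -1 then int j else if - int j \<le> y \<and> y \<le> -2 then y + 1 else y)" for y
      using Suc.IH by simp
    show ?thesis using False by (simp add: delta_Suc IH gen_apply)
  qed
qed

section \<open>The factorization \<open>w = \<delta>\<^sub>N \<pi>\<close>\<close>

definition delta_prod :: "nat \<Rightarrow> nat set \<Rightarrow> int \<Rightarrow> int" where
  "delta_prod n N = foldr (\<lambda>i f. (if i \<in> N then delta i else id) \<circ> f) [1..<n+1] id"

definition neg_set :: "nat \<Rightarrow> (int \<Rightarrow> int) \<Rightarrow> nat set" where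
  "neg_set n w = {j. 1 \<le> j \<and> j \<le> n \<and> (\<exists>x. 1 \<le> x \<and> x \<le> int n \<and> w x = - int j)}"

definition incr_on :: "nat \<Rightarrow> (int \<Rightarrow> int) \<Rightarrow> bool" where
  "incr_on n f \<longleftrightarrow> (\<forall>x y. 1 \<le> x \<longrightarrow> x < y \<longrightarrow> y \<le> int n \<longrightarrow> f x < f y)"

lemma neg_set_subset: "neg_set n w \<subseteq> {1..n}"
  unfolding neg_set_def by auto

lemma signed_perms_image_iff:
  assumes "w \<in> signed_perms n"
  shows "y \<in> w ` {1..int n} \<longleftrightarrow> 0 < \<bar>y\<bar> \<and> \<bar>y\<bar> \<le> int n \<and> (y < 0 \<longleftrightarrow> nat \<bar>y\<bar> \<in> neg_set n w)"
proof
  assume "y \<in> w ` {1..int n}"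
  then obtain x where x: "1 \<le> x" "x \<le> int n" "w x = y" by auto
  have r: "0 < \<bar>y\<bar> \<and> \<bar>y\<bar> \<le> int n" using signed_perms_abs_bound[OF assms, of x] x by auto
  have "y < 0 \<longleftrightarrow> nat \<bar>y\<bar> \<in> neg_set n w"
  proof
    assume "y < 0" then show "nat \<bar>y\<bar> \<in> neg_set n w" unfolding neg_set_def using x r by auto
  next
    assume "nat \<bar>y\<bar> \<in> neg_set n w"
    then obtain x' where x': "1 \<le> x'" "x' \<le> int n" "w x' = - \<bar>y\<bar>" unfolding neg_set_def using r by auto
    show "y < 0"
    proof (rule ccontr)
      assume "\<not> y < 0"
      then have "w x' = w (- x)" using x' x signed_permsD(2)[OF assms, of x] by auto
      then have "x' = - x" using signed_perms_inj_eq[OF assms] by simp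
      then show False using x x' by simp
    qed
  qed
  then show "0 < \<bar>y\<bar> \<and> \<bar>y\<bar> \<le> int n \<and> (y < 0 \<longleftrightarrow> nat \<bar>y\<bar> \<in> neg_set n w)" using r by simp
next
  assume h: "0 < \<bar>y\<bar> \<and> \<bar>y\<bar> \<le> int n \<and> (y < 0 \<longleftrightarrow> nat \<bar>y\<bar> \<in> neg_set n w)"
  define x where "x = inv w y"
  have wx: "w x = y" using signed_perms_inv_app[OF assms] x_def by simp
  have rx: "0 < \<bar>x\<bar> \<and> \<bar>x\<bar> \<le> int n" using signed_perms_abs_bound[OF inv_signed_perms[OF assms], of y] h x_def by simp
  show "y \<in> w ` {1..int n}"
  proof (cases "x > 0")
    case True then show ?thesis using wx rx by force
  next
    case False
    then have wmx: "w (- x) = - y" "1 \<le> - x" "- x \<le> int n" using signed_permsD(2)[OF assms, of x] wx rx by auto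
    show ?thesis
    proof (cases "y < 0")
      case True
      then obtain x' where "1 \<le> x'" "x' \<le> int n" "w x' = - int (nat \<bar>y\<bar>)" using h unfolding neg_set_def by auto
      then show ?thesis using True by force
    next
      case False
      then have yp: "y > 0" using h by auto
      have "nat \<bar>y\<bar> \<in> neg_set n w" unfolding neg_set_def
        using wmx h yp by (auto intro!: exI[of _ "-x"])
      then show ?thesis using h False by simp
    qed
  qed
qed

lemma image_eq_if_neg_set_eq:
  assumes "u \<in> signed_perms n" "v \<in> signed_perms n" "neg_set n u = neg_set n v"
  shows "u ` {1..int n} = v ` {1..int n}"
  using signed_perms_image_iff[OF assms(1)] signed_perms_image_iff[OF assms(2)] assms(3) by blast

lemma incr_on_le_iff: "incr_on n f \<Longrightarrow> 1 \<le> x \<Longrightarrow> y \<le> int n \<Longrightarrow> 1 \<le> y \<Longrightarrow> x \<le> int n \<Longrightarrow> f x \<le> f y \<longleftrightarrow> x \<le> y"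
  unfolding incr_on_def by (metis linorder_not_le order_less_imp_le order_less_le)

lemma incr_on_less_iff: "incr_on n f \<Longrightarrow> 1 \<le> x \<Longrightarrow> y \<le> int n \<Longrightarrow> 1 \<le> y \<Longrightarrow> x \<le> int n \<Longrightarrow> f x < f y \<longleftrightarrow> x < y"
  unfolding incr_on_def by (metis linorder_neqE_linordered_idom order.asym)

lemma incr_on_inj: "incr_on n f \<Longrightarrow> inj_on f {1..int n}"
  unfolding inj_on_def by (metis atLeastAtMost_iff incr_on_le_iff order_antisym order_refl)

lemma incr_on_card_below:
  assumes "incr_on n f" "1 \<le> x" "x \<le> int n"
  shows "card {y \<in> f ` {1..int n}. y \<le> f x} = nat x"
proof -
  have "{y \<in> f ` {1..int n}. y \<le> f x} = f ` {1..x}"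
    using incr_on_le_iff[OF assms(1)] assms by auto
  moreover have "inj_on f {1..x}" using incr_on_inj[OF assms(1)] inj_on_subset assms(3) by fastforce
  ultimately show ?thesis by (simp add: card_image)
qed

lemma incr_on_eq_if_image_eq:
  assumes "incr_on n f" "incr_on n g" "f ` {1..int n} = g ` {1..int n}" "1 \<le> x" "x \<le> int n"
  shows "f x = g x"
proof -
  have "f x \<in> g ` {1..int n}" using assms(3-5) by (metis atLeastAtMost_iff imageI)
  then obtain x' where x': "1 \<le> x'" "x' \<le> int n" "g x' = f x" by auto
  have "nat x = nat x'" using incr_on_card_below[OF assms(1,4,5)] incr_on_card_below[OF assms(2) x'(1,2)] x' assms(3) by simp
  then have "x = x'" using x' assms(4) by simp
  then show ?thesis using x' assms by simp
qed

lemma incr_on_unique: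
  assumes "u \<in> signed_perms n" "v \<in> signed_perms n" "incr_on n u" "incr_on n v" "neg_set n u = neg_set n v"
  shows "u = v"
  using signed_perms_eqI[OF assms(1,2)] incr_on_eq_if_image_eq[OF assms(3,4) image_eq_if_neg_set_eq[OF assms(1,2,5)]] by auto

lemma foldr_delta_trivial:
  "set xs \<inter> S = {} \<Longrightarrow> foldr (\<lambda>i f. (if i \<in> S then delta i else id) \<circ> f) xs g = g"
  by (induction xs) auto

lemma delta_signed_perms: "1 \<le> j \<Longrightarrow> j \<le> n \<Longrightarrow> delta j \<in> signed_perms n"
  unfolding delta_def by (rule word_eval_signed_perms) (auto simp: words_def)

lemma delta_strict_mono:
  assumes "j \<ge> 1" "a < b" "a \<ge> 1 \<or> a \<le> - (int j + 1)" "b \<ge> 1 \<or> b \<le> - (int j + 1)"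
  shows "delta j a < delta j b"
  using assms unfolding delta_apply[OF assms(1)] by (auto split: if_splits)

definition delta_prod_from :: "nat \<Rightarrow> nat set \<Rightarrow> nat \<Rightarrow> int \<Rightarrow> int" where
  "delta_prod_from n N j = foldr (\<lambda>i f. (if i \<in> N then delta i else id) \<circ> f) [j..<n+1] id"

lemma delta_prod_from_end: "delta_prod_from n N (n+1) = id" unfolding delta_prod_from_def by simp

lemma delta_prod_from_step: "j \<le> n \<Longrightarrow> delta_prod_from n N j = (if j \<in> N then delta j else id) \<circ> delta_prod_from n N (Suc j)"
proof -
  assume "j \<le> n"
  then have "[j..<n+1] = j # [Suc j..<n+1]" by (simp add: upt_conv_Cons)
  then show ?thesis unfolding delta_prod_from_def by simp
qed

lemma delta_comp_incr_on:
  assumes Q: "Q \<in> signed_perms n" "incr_on n Q" "\<forall>i\<in>neg_set n Q. j < i" and j: "1 \<le> j" "j \<le> n"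
  shows "incr_on n (delta j \<circ> Q)" "neg_set n (delta j \<circ> Q) = insert j (neg_set n Q)"
proof -
  have vQ: "y \<ge> 1 \<or> y \<le> - (int j + 1)" if "y \<in> Q ` {1..int n}" for y
    using signed_perms_image_iff[OF Q(1), of y] that Q(3) by (cases "y < 0") force+
  show "incr_on n (delta j \<circ> Q)"
    unfolding incr_on_def
  proof (intro allI impI)
    fix x y :: int
    assume h: "1 \<le> x" "x < y" "y \<le> int n"
    then have "Q x < Q y" using Q(2) unfolding incr_on_def by simp
    then show "(delta j \<circ> Q) x < (delta j \<circ> Q) y" using delta_strict_mono j(1) vQ h by simp
  qed
  show "neg_set n (delta j \<circ> Q) = insert j (neg_set n Q)"
  proof (rule set_eqI, rule iffI)
    fix i
    assume "i \<in> neg_set n (delta j \<circ> Q)"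
    then obtain x where x: "1 \<le> i" "i \<le> n" "1 \<le> x" "x \<le> int n" "delta j (Q x) = - int i"
      unfolding neg_set_def by auto
    have v: "0 < \<bar>Q x\<bar> \<and> (Q x < 0 \<longleftrightarrow> nat \<bar>Q x\<bar> \<in> neg_set n Q)"
      using signed_perms_image_iff[OF Q(1), of "Q x"] x by auto
    show "i \<in> insert j (neg_set n Q)"
    proof (cases "Q x < 0")
      case True
      then have "nat \<bar>Q x\<bar> \<in> neg_set n Q" "j < nat \<bar>Q x\<bar>" using v Q(3) by auto
      then have "delta j (Q x) = Q x" using True j(1) by (simp add: delta_apply)
      then have "i = nat \<bar>Q x\<bar>" using x True by simp
      then show ?thesis using \<open>nat \<bar>Q x\<bar> \<in> neg_set n Q\<close> by simp
    next
      case False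
      then have "Q x = 1" using x v j(1) by (simp add: delta_apply split: if_splits)
      then show ?thesis using x j(1) by (simp add: delta_apply)
    qed
  next
    fix i
    assume i: "i \<in> insert j (neg_set n Q)"
    have i1: "1 \<le> i" "i \<le> n" using i j neg_set_subset[of n Q] by auto
    show "i \<in> neg_set n (delta j \<circ> Q)"
    proof (cases "i = j")
      case True
      have "1 \<notin> neg_set n Q" using Q(3) j(1) by auto
      then have "(1::int) \<in> Q ` {1..int n}" using signed_perms_image_iff[OF Q(1), of 1] i1 by simp
      then obtain x where x: "1 \<le> x" "x \<le> int n" "Q x = 1" by auto
      then have "(delta j \<circ> Q) x = - int i" using True j(1) by (simp add: delta_apply)
      then show ?thesis unfolding neg_set_def using x i1 by blast
    next
      case False
      then have "i \<in> neg_set n Q" "j < i" using i Q(3) by auto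
      then have "- int i \<in> Q ` {1..int n}" using signed_perms_image_iff[OF Q(1), of "- int i"] i1 by auto
      then obtain x where x: "1 \<le> x" "x \<le> int n" "Q x = - int i" by auto
      then have "delta j (Q x) = - int i" using \<open>j < i\<close> j(1) by (simp add: delta_apply)
      then show ?thesis unfolding neg_set_def using x i1 by auto
    qed
  qed
qed

lemma delta_prod_from_props:
  assumes "N \<subseteq> {1..n}" "1 \<le> j" "j \<le> n + 1"
  shows "delta_prod_from n N j \<in> signed_perms n \<and> incr_on n (delta_prod_from n N j)
    \<and> neg_set n (delta_prod_from n N j) = {i \<in> N. i \<ge> j}"
  using assms(2,3)
proof (induction "n + 1 - j" arbitrary: j)
  case 0
  then have e: "delta_prod_from n N j = id" and "j = n + 1" using delta_prod_from_end by auto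
  then have "{i \<in> N. i \<ge> j} = {}" using assms(1) by auto
  moreover have "neg_set n id = {}" "incr_on n id" unfolding neg_set_def incr_on_def by auto
  ultimately show ?case unfolding e using id_signed_perms by blast
next
  case (Suc m)
  define Q where "Q = delta_prod_from n N (Suc j)"
  have jn: "j \<le> n" using Suc by simp
  have IH: "Q \<in> signed_perms n" "incr_on n Q" "neg_set n Q = {i \<in> N. i \<ge> Suc j}"
    using Suc.hyps(1)[of "Suc j"] Suc.hyps(2) Suc.prems unfolding Q_def by auto
  have eq: "delta_prod_from n N j = (if j \<in> N then delta j else id) \<circ> Q"
    using delta_prod_from_step[OF jn] Q_def by simp
  show ?case
  proof (cases "j \<in> N")
    case False
    then have "{i \<in> N. i \<ge> Suc j} = {i \<in> N. i \<ge> j}" using le_eq_less_or_eq by auto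
    then show ?thesis using eq IH False by simp
  next
    case True
    then have "insert j {i \<in> N. i \<ge> Suc j} = {i \<in> N. i \<ge> j}" by auto
    then show ?thesis
      using eq True delta_comp_incr_on[OF IH(1,2) _ Suc.prems(1) jn] IH(3)
        signed_perms_comp[OF delta_signed_perms[OF Suc.prems(1) jn] IH(1)] by auto
  qed
qed

lemma delta_prod_props:
  assumes "N \<subseteq> {1..n}"
  shows "delta_prod n N \<in> signed_perms n" "incr_on n (delta_prod n N)" "neg_set n (delta_prod n N) = N"
proof -
  have "{i \<in> N. i \<ge> 1} = N" using assms by auto
  then show "delta_prod n N \<in> signed_perms n" "incr_on n (delta_prod n N)" "neg_set n (delta_prod n N) = N"
    using delta_prod_from_props[OF assms, of 1] unfolding delta_prod_def delta_prod_from_def by auto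
qed

lemma delta_prod_unique:
  assumes "N \<subseteq> {1..n}" "w \<in> signed_perms n" "incr_on n w" "neg_set n w = N"
  shows "w = delta_prod n N"
  using incr_on_unique[OF assms(2) delta_prod_props(1)[OF assms(1)] assms(3) delta_prod_props(2)[OF assms(1)]]
    delta_prod_props(3)[OF assms(1)] assms(4) by simp

lemma delta_prod_empty: "delta_prod n {} = id"
  unfolding delta_prod_def by (rule foldr_delta_trivial) simp

lemma foldr_delta_eq_delta_prod:
  assumes "S \<subseteq> {1..v}" "v \<le> n"
  shows "foldr (\<lambda>i f. (if i \<in> S then delta i else id) \<circ> f) [1..<v+1] id = delta_prod n S"
proof -
  have "[1..<n+1] = [1..<v+1] @ [v+1..<n+1]" using assms(2)
    using upt_add_eq_append[of 1 "v+1" "n-v"] by simp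
  moreover have "foldr (\<lambda>i f. (if i \<in> S then delta i else id) \<circ> f) [v+1..<n+1] id = id"
    using assms(1) by (intro foldr_delta_trivial) auto
  ultimately show ?thesis unfolding delta_prod_def by simp
qed

lemma delta_eq_delta_prod:
  assumes "1 \<le> i" "i \<le> n"
  shows "delta i = delta_prod n {i}"
proof -
  have "foldr (\<lambda>k f. (if k \<in> {i} then delta k else id) \<circ> f) [1..<i+1] id = delta i"
  proof -
    have "[1..<i+1] = [1..<i] @ [i]" using assms by simp
    moreover have "foldr (\<lambda>k f. (if k \<in> {i} then delta k else id) \<circ> f) [1..<i] (delta i) = delta i"
      by (rule foldr_delta_trivial) auto
    ultimately show ?thesis by simp
  qed
  then show ?thesis using foldr_delta_eq_delta_prod[of "{i}" i n] assms by simp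
qed

definition values_of :: "nat \<Rightarrow> nat set \<Rightarrow> int set" where
  "values_of n N = {y. 0 < \<bar>y\<bar> \<and> \<bar>y\<bar> \<le> int n \<and> (y < 0 \<longleftrightarrow> nat \<bar>y\<bar> \<in> N)}"

definition unsigned_perms :: "nat \<Rightarrow> (int \<Rightarrow> int) set" where
  "unsigned_perms n = {p \<in> signed_perms n. \<forall>i. 1 \<le> i \<and> i \<le> int n \<longrightarrow> p i > 0}"

definition perm_part :: "nat \<Rightarrow> (int \<Rightarrow> int) \<Rightarrow> int \<Rightarrow> int" where
  "perm_part n w = inv (delta_prod n (neg_set n w)) \<circ> w"

lemma image_eq_values_of: "w \<in> signed_perms n \<Longrightarrow> w ` {1..int n} = values_of n (neg_set n w)"
  using signed_perms_image_iff[of w n] unfolding values_of_def by auto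

lemma delta_prod_image: "N \<subseteq> {1..n} \<Longrightarrow> delta_prod n N ` {1..int n} = values_of n N"
  using image_eq_values_of[OF delta_prod_props(1)] delta_prod_props(3) by metis

lemma unsigned_perms_signed: "p \<in> unsigned_perms n \<Longrightarrow> p \<in> signed_perms n" unfolding unsigned_perms_def by simp

lemma neg_set_unsigned: assumes "p \<in> unsigned_perms n" shows "neg_set n p = {}"
  using assms unfolding unsigned_perms_def neg_set_def by force

lemma unsigned_perms_image: assumes "p \<in> unsigned_perms n" shows "p ` {1..int n} = {1..int n}"
proof -
  have "values_of n {} = {1..int n}" unfolding values_of_def by auto
  then show ?thesis using image_eq_values_of[OF unsigned_perms_signed[OF assms]] neg_set_unsigned[OF assms] by simp
qed

lemma unsigned_perms_range: "p \<in> unsigned_perms n \<Longrightarrow> 1 \<le> x \<Longrightarrow> x \<le> int n \<Longrightarrow> 1 \<le> p x \<and> p x \<le> int n"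
proof -
  assume h: "p \<in> unsigned_perms n" "1 \<le> x" "x \<le> int n"
  then have "p x \<in> p ` {1..int n}" by auto
  then show ?thesis using unsigned_perms_image[OF h(1)] by auto
qed

lemma unsigned_perms_comp: "p \<in> unsigned_perms n \<Longrightarrow> q \<in> unsigned_perms n \<Longrightarrow> p \<circ> q \<in> unsigned_perms n"
  using unsigned_perms_range[of q n] unfolding unsigned_perms_def by (auto intro: signed_perms_comp)

lemma unsigned_perms_inv: assumes "p \<in> unsigned_perms n" shows "inv p \<in> unsigned_perms n"
proof -
  have s: "inv p \<in> signed_perms n" using inv_signed_perms unsigned_perms_signed assms by blast
  have "1 \<le> x \<Longrightarrow> x \<le> int n \<Longrightarrow> inv p x > 0" for x
  proof -
    assume "1 \<le> x" "x \<le> int n"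
    then obtain y where "1 \<le> y" "y \<le> int n" "p y = x" using unsigned_perms_image[OF assms] by force
    then show ?thesis using signed_perms_inv_app(2)[OF unsigned_perms_signed[OF assms]] by auto
  qed
  then show ?thesis using s unfolding unsigned_perms_def by auto
qed

lemma unsigned_perms_id: "id \<in> unsigned_perms n" unfolding unsigned_perms_def using id_signed_perms by auto

lemma gen_unsigned_perms: "1 \<le> i \<Longrightarrow> i < n \<Longrightarrow> gen i \<in> unsigned_perms n"
  unfolding unsigned_perms_def using gen_signed_perms[of i n] by (auto simp: gen_apply)

lemma delta_prod_factorization:
  assumes "w \<in> signed_perms n"
  shows "perm_part n w \<in> unsigned_perms n" "delta_prod n (neg_set n w) \<circ> perm_part n w = w"
proof -
  let ?m = "delta_prod n (neg_set n w)"
  have ms: "?m \<in> signed_perms n" using delta_prod_props(1)[OF neg_set_subset] .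
  show "?m \<circ> perm_part n w = w" unfolding perm_part_def using signed_perms_inv_app(1)[OF ms] by auto
  have vv: "?m ` {1..int n} = w ` {1..int n}"
    using image_eq_if_neg_set_eq[OF ms assms] delta_prod_props(3)[OF neg_set_subset] by simp
  have "1 \<le> x \<Longrightarrow> x \<le> int n \<Longrightarrow> perm_part n w x > 0" for x
  proof -
    assume "1 \<le> x" "x \<le> int n"
    then have "w x \<in> ?m ` {1..int n}" using vv by auto
    then obtain y where "1 \<le> y" "y \<le> int n" "?m y = w x" by auto
    then show ?thesis unfolding perm_part_def using signed_perms_inv_app(2)[OF ms, of y] by auto
  qed
  moreover have "perm_part n w \<in> signed_perms n" unfolding perm_part_def using signed_perms_comp[OF inv_signed_perms[OF ms] assms] .
  ultimately show "perm_part n w \<in> unsigned_perms n" unfolding unsigned_perms_def by auto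
qed

lemma values_of_inj:
  assumes "values_of n A = values_of n B" "A \<subseteq> {1..n}" "B \<subseteq> {1..n}"
  shows "A = B"
proof -
  have "j \<in> A \<longleftrightarrow> - int j \<in> values_of n A" "j \<in> B \<longleftrightarrow> - int j \<in> values_of n B" for j
    using assms(2,3) unfolding values_of_def by auto
  then show ?thesis using assms(1) by blast
qed

lemma delta_prod_factorization_unique:
  assumes "N \<subseteq> {1..n}" "p \<in> unsigned_perms n"
  shows "neg_set n (delta_prod n N \<circ> p) = N" "perm_part n (delta_prod n N \<circ> p) = p"
proof -
  have "(delta_prod n N \<circ> p) ` {1..int n} = delta_prod n N ` (p ` {1..int n})"
    by (rule image_comp[symmetric])
  then have "(delta_prod n N \<circ> p) ` {1..int n} = delta_prod n N ` {1..int n}"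
    using unsigned_perms_image[OF assms(2)] by simp
  then have "values_of n (neg_set n (delta_prod n N \<circ> p)) = values_of n N"
    using image_eq_values_of[OF signed_perms_comp[OF delta_prod_props(1)[OF assms(1)] unsigned_perms_signed[OF assms(2)]]] delta_prod_image[OF assms(1)] by simp
  then show "neg_set n (delta_prod n N \<circ> p) = N" using values_of_inj neg_set_subset assms(1) by blast
  then show "perm_part n (delta_prod n N \<circ> p) = p" unfolding perm_part_def
    using signed_perms_inv_app(2)[OF delta_prod_props(1)[OF assms(1)]] by auto
qed

lemma perm_part_unsigned: "p \<in> unsigned_perms n \<Longrightarrow> neg_set n p = {} \<and> perm_part n p = p"
  using delta_prod_factorization_unique[of "{}" n p] delta_prod_empty by simp

lemma neg_set_gen_comp:
  assumes "f \<in> signed_perms n" "a < n"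
  shows "neg_set n (gen a \<circ> f) = {j. 1 \<le> j \<and> j \<le> n \<and> - gen a (int j) \<in> f ` {1..int n}}"
proof -
  have e: "gen a (f x) = - int j \<longleftrightarrow> f x = - gen a (int j)" for x j
    using gen_gen[of a] signed_permsD(2)[OF gen_signed_perms[OF assms(2)]] by metis
  have "(\<exists>x. 1 \<le> x \<and> x \<le> int n \<and> (gen a \<circ> f) x = - int j) \<longleftrightarrow> - gen a (int j) \<in> f ` {1..int n}" for j
  proof
    assume "\<exists>x. 1 \<le> x \<and> x \<le> int n \<and> (gen a \<circ> f) x = - int j"
    then obtain x where x: "1 \<le> x" "x \<le> int n" "gen a (f x) = - int j" by auto
    then have "f x = - gen a (int j)" using e[of x j] by simp
    moreover have "f x \<in> f ` {1..int n}" using x by auto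
    ultimately show "- gen a (int j) \<in> f ` {1..int n}" by simp
  next
    assume "- gen a (int j) \<in> f ` {1..int n}"
    then obtain x where "- gen a (int j) = f x" "x \<in> {1..int n}" by (rule imageE)
    then show "\<exists>x. 1 \<le> x \<and> x \<le> int n \<and> (gen a \<circ> f) x = - int j" using e by auto
  qed
  then show ?thesis unfolding neg_set_def by blast
qed

lemma gen_0_strict_mono: "y1 < y2 \<Longrightarrow> y1 \<noteq> 0 \<Longrightarrow> y2 \<noteq> 0 \<Longrightarrow> \<not> (y1 = -1 \<and> y2 = 1) \<Longrightarrow> gen 0 y1 < gen 0 y2"
  by (auto simp: gen_0_apply)

lemma gen_strict_mono: "k \<ge> 1 \<Longrightarrow> y1 < y2 \<Longrightarrow> \<not> (y1 = int k \<and> y2 = int k + 1) \<Longrightarrow> \<not> (y1 = - (int k + 1) \<and> y2 = - int k)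
   \<Longrightarrow> gen k y1 < gen k y2"
  by (auto simp: gen_apply)

lemma incr_on_comp:
  assumes "incr_on n f" "\<And>y1 y2. y1 \<in> f ` {1..int n} \<Longrightarrow> y2 \<in> f ` {1..int n} \<Longrightarrow> y1 < y2 \<Longrightarrow> g y1 < g y2"
  shows "incr_on n (g \<circ> f)"
  using assms unfolding incr_on_def by auto

lemma gen_0_delta_prod:
  assumes "N \<subseteq> {1..n}" "1 \<le> n"
  shows "gen 0 \<circ> delta_prod n N = delta_prod n (if 1 \<in> N then N - {1} else insert 1 N)"
proof (rule delta_prod_unique)
  show "(if 1 \<in> N then N - {1} else insert 1 N) \<subseteq> {1..n}" using assms by auto
  show "gen 0 \<circ> delta_prod n N \<in> signed_perms n" using signed_perms_comp[OF gen_signed_perms delta_prod_props(1)[OF assms(1)]] assms by simp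
  show "incr_on n (gen 0 \<circ> delta_prod n N)"
  proof (rule incr_on_comp[OF delta_prod_props(2)[OF assms(1)]])
    fix y1 y2 assume h: "y1 \<in> delta_prod n N ` {1..int n}" "y2 \<in> delta_prod n N ` {1..int n}" "y1 < y2"
    then have "y1 \<in> values_of n N" "y2 \<in> values_of n N" using delta_prod_image[OF assms(1)] by auto
    then have "y1 \<noteq> 0" "y2 \<noteq> 0" "\<not> (y1 = -1 \<and> y2 = 1)" unfolding values_of_def by auto
    then show "gen 0 y1 < gen 0 y2" using gen_0_strict_mono h by simp
  qed
  have "0 < n" using assms(2) by simp
  show "neg_set n (gen 0 \<circ> delta_prod n N) = (if 1 \<in> N then N - {1} else insert 1 N)"
    unfolding neg_set_gen_comp[OF delta_prod_props(1)[OF assms(1)] \<open>0 < n\<close>] delta_prod_image[OF assms(1)]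
    using assms by (auto simp: values_of_def gen_0_apply)
qed

lemma gen_delta_prod_mixed:
  assumes "N \<subseteq> {1..n}" "1 \<le> k" "k < n" "(k \<in> N) \<noteq> (k + 1 \<in> N)"
  shows "gen k \<circ> delta_prod n N = delta_prod n (if k \<in> N then insert (k+1) (N - {k}) else insert k (N - {k+1}))"
proof (rule delta_prod_unique)
  show "(if k \<in> N then insert (k+1) (N - {k}) else insert k (N - {k+1})) \<subseteq> {1..n}" using assms by auto
  show "gen k \<circ> delta_prod n N \<in> signed_perms n" using signed_perms_comp[OF gen_signed_perms delta_prod_props(1)[OF assms(1)]] assms by simp
  show "incr_on n (gen k \<circ> delta_prod n N)"
  proof (rule incr_on_comp[OF delta_prod_props(2)[OF assms(1)]])
    fix y1 y2 assume h: "y1 \<in> delta_prod n N ` {1..int n}" "y2 \<in> delta_prod n N ` {1..int n}" "y1 < y2"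
    then have "y1 \<in> values_of n N" "y2 \<in> values_of n N" using delta_prod_image[OF assms(1)] by auto
    then have "\<not> (y1 = int k \<and> y2 = int k + 1)" "\<not> (y1 = - (int k + 1) \<and> y2 = - int k)"
      using assms(4) unfolding values_of_def by (auto simp: nat_add_distrib)
    then show "gen k y1 < gen k y2" using gen_strict_mono h assms by simp
  qed
  show "neg_set n (gen k \<circ> delta_prod n N) = (if k \<in> N then insert (k+1) (N - {k}) else insert k (N - {k+1}))"
    unfolding neg_set_gen_comp[OF delta_prod_props(1)[OF assms(1)] assms(3)] delta_prod_image[OF assms(1)]
    using assms by (auto simp: values_of_def gen_apply nat_add_distrib)
qed

text \<open>If \<open>k\<close> and \<open>k + 1\<close> are both in \<open>N\<close> or both outside, the values \<open>\<plusminus>k\<close>, \<open>\<plusminus>(k + 1)\<close>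
  of \<open>\<delta>\<^sub>N\<close> sit at two adjacent positions; \<open>pos_of n N k\<close> is the left one.\<close>

definition pos_of :: "nat \<Rightarrow> nat set \<Rightarrow> nat \<Rightarrow> int" where
  "pos_of n N k = (if k \<in> N then inv (delta_prod n N) (- (int k + 1)) else inv (delta_prod n N) (int k))"

lemma values_of_uminus: "y \<in> values_of n N \<Longrightarrow> - y \<notin> values_of n N"
  unfolding values_of_def by auto

lemma delta_prod_inv_range:
  assumes "N \<subseteq> {1..n}" "y \<in> values_of n N"
  shows "1 \<le> inv (delta_prod n N) y" "inv (delta_prod n N) y \<le> int n" "delta_prod n N (inv (delta_prod n N) y) = y"
proof -
  obtain x where x: "x \<in> {1..int n}" "y = delta_prod n N x" using assms delta_prod_image[OF assms(1)] by blast
  then have "inv (delta_prod n N) y = x" using signed_perms_inv_app(2)[OF delta_prod_props(1)[OF assms(1)]] by simp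
  then show "1 \<le> inv (delta_prod n N) y" "inv (delta_prod n N) y \<le> int n" "delta_prod n N (inv (delta_prod n N) y) = y" using x by auto
qed

lemma gen_fixed: "k \<ge> 1 \<Longrightarrow> y \<noteq> int k \<Longrightarrow> y \<noteq> int k + 1 \<Longrightarrow> y \<noteq> - int k \<Longrightarrow> y \<noteq> - (int k + 1) \<Longrightarrow> gen k y = y"
  by (simp add: gen_apply)

lemma pos_of_same:
  assumes N: "N \<subseteq> {1..n}" and k: "1 \<le> k" "k < n" and st: "(k \<in> N) = (k+1 \<in> N)"
  shows "1 \<le> pos_of n N k" "pos_of n N k < int n"
    "delta_prod n N (pos_of n N k) = (if k \<in> N then - (int k + 1) else int k)"
    "delta_prod n N (pos_of n N k + 1) = (if k \<in> N then - int k else int k + 1)"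
proof -
  define m where "m = delta_prod n N"
  define lo where "lo = (if k \<in> N then - (int k + 1) else int k)"
  define hi where "hi = (if k \<in> N then - int k else int k + 1)"
  have hi_lo: "hi = lo + 1" unfolding hi_def lo_def by simp
  have incr: "incr_on n m" unfolding m_def using delta_prod_props[OF N] by auto
  have "lo \<in> values_of n N" "hi \<in> values_of n N"
    unfolding lo_def hi_def values_of_def using k st N by (auto simp: nat_add_distrib)
  then obtain p q where p: "1 \<le> p" "p \<le> int n" "m p = lo" and q: "1 \<le> q" "q \<le> int n" "m q = hi"
    and p_def: "p = inv m lo"
    using delta_prod_inv_range[OF N] unfolding m_def by metis
  have "p < q" using incr_on_less_iff[OF incr p(1) q(2) q(1) p(2)] p q hi_lo by simp
  moreover have "\<not> p + 1 < q"
  proof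
    assume "p + 1 < q"
    then have "m p < m (p + 1)" "m (p + 1) < m q" using incr p q unfolding incr_on_def by auto
    then show False using p q hi_lo by simp
  qed
  ultimately have "q = p + 1" by simp
  moreover have "pos_of n N k = p" unfolding pos_of_def p_def m_def lo_def by simp
  ultimately show "1 \<le> pos_of n N k" "pos_of n N k < int n"
    "delta_prod n N (pos_of n N k) = (if k \<in> N then - (int k + 1) else int k)"
    "delta_prod n N (pos_of n N k + 1) = (if k \<in> N then - int k else int k + 1)"
    using p q unfolding m_def lo_def hi_def by auto
qed

lemma gen_delta_prod_same:
  assumes N: "N \<subseteq> {1..n}" and k: "1 \<le> k" "k < n" and st: "(k \<in> N) = (k+1 \<in> N)"
  shows "gen k \<circ> delta_prod n N = delta_prod n N \<circ> gen (nat (pos_of n N k))"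
proof (rule signed_perms_eqI)
  define m where "m = delta_prod n N"
  define p where "p = pos_of n N k"
  define i where "i = nat p"
  note pos = pos_of_same[OF N k st, folded m_def p_def]
  have i: "1 \<le> i" "i < n" "int i = p" using pos(1,2) unfolding i_def by auto
  have m: "m \<in> signed_perms n" unfolding m_def using delta_prod_props(1)[OF N] .
  show "gen k \<circ> delta_prod n N \<in> signed_perms n" "delta_prod n N \<circ> gen (nat (pos_of n N k)) \<in> signed_perms n"
    using signed_perms_comp gen_signed_perms m k(2) i(2) unfolding m_def i_def p_def by auto
  fix x :: int
  assume x: "1 \<le> x" "x \<le> int n"
  consider "x = p" | "x = p + 1" | "x \<noteq> p" "x \<noteq> p + 1" by blast
  then show "(gen k \<circ> delta_prod n N) x = (delta_prod n N \<circ> gen (nat (pos_of n N k))) x"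
  proof cases
    case 1
    then show ?thesis using pos(3,4) i k(1) by (simp add: gen_apply m_def p_def i_def)
  next
    case 2
    then show ?thesis using pos(3,4) i k(1) by (simp add: gen_apply m_def p_def i_def)
  next
    case 3
    have "m x \<in> values_of n N" using delta_prod_image[OF N] x unfolding m_def by auto
    moreover have "m x \<noteq> m p" "m x \<noteq> m (p + 1)" using 3 signed_perms_inj_eq[OF m] by auto
    moreover have "m p \<in> values_of n N" "m (p + 1) \<in> values_of n N"
      using pos(1,2) delta_prod_image[OF N] unfolding m_def by auto
    ultimately have "gen k (m x) = m x"
      using k(1) pos(3,4) values_of_uminus[of "m p" n N] values_of_uminus[of "m (p + 1)" n N]
      by (intro gen_fixed) (auto simp: add.commute split: if_splits)
    moreover have "gen i x = x" using 3 i x by (auto simp: gen_apply)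
    ultimately show ?thesis unfolding m_def p_def i_def by simp
  qed
qed

section \<open>Length\<close>

definition inversions :: "nat \<Rightarrow> (int \<Rightarrow> int) \<Rightarrow> (int \<times> int) set" where
  "inversions n p = {(a, b). 1 \<le> a \<and> a < b \<and> b \<le> int n \<and> p a > p b}"

lemma inversions_finite: "finite (inversions n p)"
proof -
  have "inversions n p \<subseteq> {1..int n} \<times> {1..int n}" unfolding inversions_def by auto
  then show ?thesis by (rule finite_subset) simp
qed

lemma gen_range: "1 \<le> i \<Longrightarrow> i < n \<Longrightarrow> 1 \<le> x \<Longrightarrow> x \<le> int n \<Longrightarrow> 1 \<le> gen i x \<and> gen i x \<le> int n"
  by (auto simp: gen_apply)

lemma inversions_gen_map:
  assumes i: "1 \<le> i" "i < n" and ab: "(a, b) \<in> inversions n p - {(int i, int i + 1)}"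
  shows "(gen i a, gen i b) \<in> inversions n (p \<circ> gen i) - {(int i, int i + 1)}"
proof -
  have h: "1 \<le> a" "a < b" "b \<le> int n" "p a > p b" "(a, b) \<noteq> (int i, int i + 1)" using ab unfolding inversions_def by auto
  have "gen i a < gen i b" using gen_strict_mono[of i a b] i h by auto
  moreover have "1 \<le> gen i a" "gen i b \<le> int n" using gen_range[OF i] h by auto
  moreover have "(p \<circ> gen i) (gen i a) > (p \<circ> gen i) (gen i b)" using h gen_gen by simp
  moreover have "(gen i a, gen i b) \<noteq> (int i, int i + 1)"
  proof
    assume "(gen i a, gen i b) = (int i, int i + 1)"
    then have "gen i a = int i" "gen i b = int i + 1" by auto
    then have "a = gen i (int i)" "b = gen i (int i + 1)" using gen_gen[of i a] gen_gen[of i b] by auto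
    then have "a = int i + 1" "b = int i" using i by (auto simp: gen_apply)
    then show False using h by simp
  qed
  ultimately show ?thesis unfolding inversions_def by auto
qed

lemma card_inversions_gen_comp_Diff:
  assumes i: "1 \<le> i" "i < n"
  shows "card (inversions n (p \<circ> gen i) - {(int i, int i + 1)}) = card (inversions n p - {(int i, int i + 1)})"
proof -
  let ?E = "{(int i, int i + 1)}"
  let ?\<tau> = "map_prod (gen i) (gen i)"
  have inj: "inj ?\<tau>" using map_prod_inj_on[OF bij_is_inj bij_is_inj, OF gen_bij gen_bij] by simp
  have pp: "(p \<circ> gen i) \<circ> gen i = p" using gen_comp_gen by (metis comp_assoc comp_id)
  have "?\<tau> ` (inversions n p - ?E) = inversions n (p \<circ> gen i) - ?E"
  proof
    show "?\<tau> ` (inversions n p - ?E) \<subseteq> inversions n (p \<circ> gen i) - ?E"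
      using inversions_gen_map[OF i] by auto
    show "inversions n (p \<circ> gen i) - ?E \<subseteq> ?\<tau> ` (inversions n p - ?E)"
    proof
      fix c
      assume c: "c \<in> inversions n (p \<circ> gen i) - ?E"
      obtain a b where ab: "c = (a, b)" by (cases c)
      have "(gen i a, gen i b) \<in> inversions n ((p \<circ> gen i) \<circ> gen i) - ?E"
        using inversions_gen_map[OF i, of a b "p \<circ> gen i"] c ab by auto
      then have "(gen i a, gen i b) \<in> inversions n p - ?E" using pp by simp
      moreover have "?\<tau> (gen i a, gen i b) = c" using ab gen_gen by simp
      ultimately show "c \<in> ?\<tau> ` (inversions n p - ?E)" by force
    qed
  qed
  then show ?thesis using card_image[OF inj_on_subset[OF inj]] by (metis subset_UNIV)
qed

lemma card_inversions_gen_comp: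
  assumes i: "1 \<le> i" "i < n" and injp: "inj p"
  shows "card (inversions n (p \<circ> gen i)) = (if p (int i) > p (int i + 1) then card (inversions n p) - 1 else card (inversions n p) + 1)"
    "p (int i) > p (int i + 1) \<Longrightarrow> card (inversions n p) \<ge> 1"
proof -
  define E where "E = {(int i, int i + 1)}"
  have c1: "card (inversions n p - E) = card (inversions n (p \<circ> gen i) - E)"
    using card_inversions_gen_comp_Diff[OF i] unfolding E_def by simp
  have g1: "gen i (int i) = int i + 1" "gen i (int i + 1) = int i" using i by (auto simp: gen_apply)
  have e1: "(int i, int i + 1) \<in> inversions n p \<longleftrightarrow> p (int i) > p (int i + 1)" unfolding inversions_def using i by auto
  have e2: "(int i, int i + 1) \<in> inversions n (p \<circ> gen i) \<longleftrightarrow> p (int i + 1) > p (int i)" unfolding inversions_def using i g1 by auto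
  have f1: "finite (inversions n p)" "finite (inversions n (p \<circ> gen i))" using inversions_finite by auto
  show "card (inversions n (p \<circ> gen i)) = (if p (int i) > p (int i + 1) then card (inversions n p) - 1 else card (inversions n p) + 1)"
  proof (cases "p (int i) > p (int i + 1)")
    case True
    then have "card (inversions n p - E) = card (inversions n p) - 1" using e1 f1 unfolding E_def by (simp add: card_Diff_singleton)
    moreover have "inversions n (p \<circ> gen i) - E = inversions n (p \<circ> gen i)" using e2 True unfolding E_def by auto
    ultimately show ?thesis using c1 True by simp
  next
    case False
    have ne: "p (int i) \<noteq> p (int i + 1)" using injp by (metis inj_eq n_not_Suc_n of_nat_Suc of_nat_eq_iff add.commute)
    then have T: "p (int i + 1) > p (int i)" using False by simp
    then have "card (inversions n (p \<circ> gen i) - E) = card (inversions n (p \<circ> gen i)) - 1" using e2 f1 unfolding E_def by (simp add: card_Diff_singleton)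
    moreover have "inversions n p - E = inversions n p" using e1 False unfolding E_def by auto
    moreover have "card (inversions n (p \<circ> gen i)) \<ge> 1" using e2 T f1 by (metis One_nat_def Suc_leI card_gt_0_iff empty_iff)
    ultimately show ?thesis using c1 False by simp
  qed
  show "p (int i) > p (int i + 1) \<Longrightarrow> card (inversions n p) \<ge> 1"
    using e1 f1 by (metis One_nat_def Suc_leI card_gt_0_iff empty_iff)
qed

definition len_B :: "nat \<Rightarrow> (int \<Rightarrow> int) \<Rightarrow> nat" where
  "len_B n w = (\<Sum>j\<in>neg_set n w. j) + card (inversions n (inv (perm_part n w)))"

definition left_descent :: "nat \<Rightarrow> nat \<Rightarrow> (int \<Rightarrow> int) \<Rightarrow> bool" where
  "left_descent n a w \<longleftrightarrow> len_B n (gen a \<circ> w) < len_B n w"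

lemma neg_set_finite: "finite (neg_set n w)"
  using neg_set_subset finite_subset by blast

lemma delta_prod_factorization_comp:
  assumes "w \<in> signed_perms n" "f \<circ> delta_prod n (neg_set n w) = delta_prod n N' \<circ> q" "N' \<subseteq> {1..n}" "q \<in> unsigned_perms n"
  shows "neg_set n (f \<circ> w) = N'" "perm_part n (f \<circ> w) = q \<circ> perm_part n w"
proof -
  have "f \<circ> w = f \<circ> delta_prod n (neg_set n w) \<circ> perm_part n w" using delta_prod_factorization(2)[OF assms(1)] by (simp add: comp_assoc)
  then have e: "f \<circ> w = delta_prod n N' \<circ> (q \<circ> perm_part n w)" using assms(2) by (simp add: comp_assoc)
  have "q \<circ> perm_part n w \<in> unsigned_perms n" using unsigned_perms_comp[OF assms(4) delta_prod_factorization(1)[OF assms(1)]] .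
  then show "neg_set n (f \<circ> w) = N'" "perm_part n (f \<circ> w) = q \<circ> perm_part n w"
    using delta_prod_factorization_unique[OF assms(3)] e by auto
qed

lemma gen_0_comp:
  assumes "w \<in> signed_perms n" "1 \<le> n"
  defines "N \<equiv> neg_set n w"
  shows "neg_set n (gen 0 \<circ> w) = (if 1 \<in> N then N - {1} else insert 1 N)" "perm_part n (gen 0 \<circ> w) = perm_part n w"
    "len_B n (gen 0 \<circ> w) = (if 1 \<in> N then len_B n w - 1 else len_B n w + 1)" "1 \<in> N \<Longrightarrow> len_B n w \<ge> 1"
proof -
  have N: "N \<subseteq> {1..n}" unfolding N_def by (rule neg_set_subset)
  have sub: "(if 1 \<in> N then N - {1} else insert 1 N) \<subseteq> {1..n}" using N assms(2) by auto
  have e: "gen 0 \<circ> delta_prod n N = delta_prod n (if 1 \<in> N then N - {1} else insert 1 N) \<circ> id"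
    using gen_0_delta_prod[OF N assms(2)] by simp
  show ng: "neg_set n (gen 0 \<circ> w) = (if 1 \<in> N then N - {1} else insert 1 N)" "perm_part n (gen 0 \<circ> w) = perm_part n w"
    using delta_prod_factorization_comp[OF assms(1) e[unfolded N_def] sub[unfolded N_def] unsigned_perms_id] unfolding N_def by auto
  have fN: "finite N" unfolding N_def by (rule neg_set_finite)
  have "(\<Sum>j\<in>(if 1 \<in> N then N - {1} else insert 1 N). j) = (if 1 \<in> N then (\<Sum>j\<in>N. j) - 1 else (\<Sum>j\<in>N. j) + 1)"
    using fN by (auto simp: sum_diff1_nat)
  moreover have "1 \<in> N \<Longrightarrow> (\<Sum>j\<in>N. j) \<ge> 1" using fN by (metis member_le_sum zero_le)
  ultimately show "len_B n (gen 0 \<circ> w) = (if 1 \<in> N then len_B n w - 1 else len_B n w + 1)" "1 \<in> N \<Longrightarrow> len_B n w \<ge> 1"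
    unfolding len_B_def using ng N_def by auto
qed

lemma gen_comp_mixed:
  assumes "w \<in> signed_perms n" "1 \<le> k" "k < n"
  defines "N \<equiv> neg_set n w"
  assumes st: "(k \<in> N) \<noteq> (k + 1 \<in> N)"
  shows "neg_set n (gen k \<circ> w) = (if k \<in> N then insert (k+1) (N - {k}) else insert k (N - {k+1}))"
    "perm_part n (gen k \<circ> w) = perm_part n w"
    "len_B n (gen k \<circ> w) = (if k \<in> N then len_B n w + 1 else len_B n w - 1)" "k \<notin> N \<Longrightarrow> len_B n w \<ge> 1"
proof -
  have N: "N \<subseteq> {1..n}" unfolding N_def by (rule neg_set_subset)
  let ?N' = "(if k \<in> N then insert (k+1) (N - {k}) else insert k (N - {k+1}))"
  have sub: "?N' \<subseteq> {1..n}" using N assms(2,3) by auto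
  have e: "gen k \<circ> delta_prod n N = delta_prod n ?N' \<circ> id"
    using gen_delta_prod_mixed[OF N assms(2,3) st] by simp
  show ng: "neg_set n (gen k \<circ> w) = ?N'" "perm_part n (gen k \<circ> w) = perm_part n w"
    using delta_prod_factorization_comp[OF assms(1) e[unfolded N_def] sub[unfolded N_def] unsigned_perms_id] unfolding N_def by auto
  have fN: "finite N" unfolding N_def by (rule neg_set_finite)
  have s1: "(\<Sum>j\<in>?N'. j) = (if k \<in> N then (\<Sum>j\<in>N. j) + 1 else (\<Sum>j\<in>N. j) - 1)"
  proof (cases "k \<in> N")
    case True
    then have "k + 1 \<notin> N" using st by simp
    then have "(\<Sum>j\<in>?N'. j) = (\<Sum>j\<in>N - {k}. j) + (k + 1)" using True fN by (simp add: sum.insert)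
    moreover have "(\<Sum>j\<in>N. j) = (\<Sum>j\<in>N - {k}. j) + k" using True fN by (metis add.commute sum.remove)
    ultimately show ?thesis using True by simp
  next
    case False
    then have "k + 1 \<in> N" using st by simp
    then have "(\<Sum>j\<in>?N'. j) = (\<Sum>j\<in>N - {k+1}. j) + k" using False fN by (simp add: sum.insert)
    moreover have "(\<Sum>j\<in>N. j) = (\<Sum>j\<in>N - {k+1}. j) + (k + 1)" using \<open>k+1 \<in> N\<close> fN by (metis add.commute sum.remove)
    ultimately show ?thesis using False by simp
  qed
  have "k \<notin> N \<Longrightarrow> (\<Sum>j\<in>N. j) \<ge> 1" using fN st by (metis le_add2 member_le_sum zero_le order_trans)
  then show "len_B n (gen k \<circ> w) = (if k \<in> N then len_B n w + 1 else len_B n w - 1)" "k \<notin> N \<Longrightarrow> len_B n w \<ge> 1"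
    unfolding len_B_def using ng s1 N_def by auto
qed

lemma gen_comp_same:
  assumes "w \<in> signed_perms n" "1 \<le> k" "k < n"
  defines "N \<equiv> neg_set n w"
  assumes st: "(k \<in> N) = (k + 1 \<in> N)"
  defines "i \<equiv> nat (pos_of n N k)"
  shows "1 \<le> i" "i < n" "neg_set n (gen k \<circ> w) = N" "perm_part n (gen k \<circ> w) = gen i \<circ> perm_part n w"
    "len_B n (gen k \<circ> w) = (if inv (perm_part n w) (int i) > inv (perm_part n w) (int i + 1) then len_B n w - 1 else len_B n w + 1)"
    "inv (perm_part n w) (int i) > inv (perm_part n w) (int i + 1) \<Longrightarrow> len_B n w \<ge> 1"
proof -
  have N: "N \<subseteq> {1..n}" unfolding N_def by (rule neg_set_subset)
  have i: "1 \<le> i" "i < n" using pos_of_same(1,2)[OF N assms(2,3) st] unfolding i_def by auto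
  show "1 \<le> i" "i < n" using i by auto
  have e: "gen k \<circ> delta_prod n N = delta_prod n N \<circ> gen i"
    using gen_delta_prod_same[OF N assms(2,3) st] unfolding i_def .
  show ng: "neg_set n (gen k \<circ> w) = N" "perm_part n (gen k \<circ> w) = gen i \<circ> perm_part n w"
    using delta_prod_factorization_comp[OF assms(1) e[unfolded N_def] N[unfolded N_def] gen_unsigned_perms[OF i]] unfolding N_def by auto
  define p where "p = inv (perm_part n w)"
  have ps: "perm_part n w \<in> signed_perms n" using delta_prod_factorization(1)[OF assms(1)] unsigned_perms_signed by blast
  have ip: "inv (gen i \<circ> perm_part n w) = p \<circ> gen i"
    unfolding p_def using o_inv_distrib[OF gen_bij signed_permsD(1)[OF ps]] gen_inv by simp
  have injp: "inj p" unfolding p_def using inv_signed_perms[OF ps] signed_permsD(1) bij_is_inj by blast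
  show "len_B n (gen k \<circ> w) = (if inv (perm_part n w) (int i) > inv (perm_part n w) (int i + 1) then len_B n w - 1 else len_B n w + 1)"
    "inv (perm_part n w) (int i) > inv (perm_part n w) (int i + 1) \<Longrightarrow> len_B n w \<ge> 1"
    unfolding len_B_def ng ip using card_inversions_gen_comp[OF i injp] unfolding p_def N_def by auto
qed

lemma len_B_gen_comp:
  assumes "w \<in> signed_perms n" "a < n"
  shows "len_B n (gen a \<circ> w) + 1 = len_B n w \<or> len_B n (gen a \<circ> w) = len_B n w + 1"
proof (cases "a = 0")
  case True
  then show ?thesis using gen_0_comp[OF assms(1)] assms(2) by (cases "1 \<in> neg_set n w") auto
next
  case False
  then have k: "1 \<le> a" by simp
  show ?thesis
  proof (cases "(a \<in> neg_set n w) = (a + 1 \<in> neg_set n w)")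
    case True
    show ?thesis using gen_comp_same(5,6)[OF assms(1) k assms(2) True] by (auto split: if_splits)
  next
    case False
    show ?thesis using gen_comp_mixed(3,4)[OF assms(1) k assms(2) False] by (auto split: if_splits)
  qed
qed

lemma left_descent_iff_len_B: "w \<in> signed_perms n \<Longrightarrow> a < n \<Longrightarrow> left_descent n a w \<longleftrightarrow> len_B n (gen a \<circ> w) + 1 = len_B n w"
  using len_B_gen_comp[of w n a] unfolding left_descent_def by auto

lemma len_B_id: "len_B n id = 0"
proof -
  have "neg_set n id = {}" unfolding neg_set_def by auto
  moreover have "perm_part n id = id" using perm_part_unsigned[OF unsigned_perms_id] by simp
  moreover have "inversions n id = {}" unfolding inversions_def by auto
  ultimately show ?thesis unfolding len_B_def by (simp add: inv_id)
qed

lemma incr_on_if_steps: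
  assumes "\<And>i. 1 \<le> i \<Longrightarrow> i < int n \<Longrightarrow> p i < p (i + 1)"
  shows "incr_on n p"
  unfolding incr_on_def
proof (intro allI impI)
  fix x y :: int assume h: "1 \<le> x" "x < y" "y \<le> int n"
  have "x + int m + 1 \<le> int n \<longrightarrow> p x < p (x + int m + 1)" for m :: nat
  proof (induction m)
    case 0 then show ?case using assms h by auto
  next
    case (Suc m)
    then show ?case using assms[of "x + int m + 1"] h by auto
  qed
  from this[of "nat (y - x - 1)"] show "p x < p y" using h by simp
qed

lemma Min_neg_set_pred:
  assumes "neg_set n w \<noteq> {}" "1 \<notin> neg_set n w"
  defines "k \<equiv> Min (neg_set n w) - 1"
  shows "1 \<le> k" "k < n" "k \<notin> neg_set n w" "k + 1 \<in> neg_set n w" "\<forall>j\<in>neg_set n w. k < j"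
proof -
  let ?N = "neg_set n w"
  have jN: "Min ?N \<in> ?N" and jmin: "\<forall>i\<in>?N. Min ?N \<le> i"
    using Min_in[OF neg_set_finite assms(1)] Min_le[OF neg_set_finite] by auto
  have "2 \<le> Min ?N" "Min ?N \<le> n"
    using jN assms(2) neg_set_subset[of n w] by (cases "Min ?N = 1"; auto)+
  then show "1 \<le> k" "k < n" "k \<notin> ?N" "k + 1 \<in> ?N" "\<forall>j\<in>?N. k < j"
    using jN jmin unfolding k_def by fastforce+
qed

lemma unsigned_perms_descent_exists:
  assumes p: "p \<in> unsigned_perms n" "p \<noteq> id"
  shows "\<exists>i. 1 \<le> i \<and> i < int n \<and> p (i + 1) < p i"
proof (rule ccontr)
  assume "\<not> ?thesis"
  then have "\<And>i. 1 \<le> i \<Longrightarrow> i < int n \<Longrightarrow> p i < p (i + 1)"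
    using signed_perms_inj_eq[OF unsigned_perms_signed[OF p(1)]]
    by (metis linorder_neqE_linordered_idom add_cancel_left_right one_neq_zero)
  then have "incr_on n p" by (rule incr_on_if_steps)
  then have "p = id"
    using incr_on_unique[OF unsigned_perms_signed[OF p(1)] id_signed_perms] neg_set_unsigned[OF p(1)]
      neg_set_unsigned[OF unsigned_perms_id] by (auto simp: incr_on_def)
  then show False using p(2) by simp
qed

lemma left_descent_exists:
  assumes w: "w \<in> signed_perms n" "w \<noteq> id"
  shows "\<exists>a < n. left_descent n a w"
proof -
  define N where "N = neg_set n w"
  have N: "N \<subseteq> {1..n}" unfolding N_def by (rule neg_set_subset)
  consider "1 \<in> N" | "N \<noteq> {}" "1 \<notin> N" | "N = {}" by blast
  then show ?thesis
  proof cases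
    case 1
    then have n1: "1 \<le> n" using N by auto
    then have "left_descent n 0 w"
      using gen_0_comp(3,4)[OF w(1) n1] 1 unfolding left_descent_def N_def by auto
    then show ?thesis using n1 by (intro exI[of _ 0]) auto
  next
    case 2
    note k = Min_neg_set_pred[of n w, folded N_def, OF 2]
    have "left_descent n (Min N - 1) w"
      using gen_comp_mixed(3,4)[OF w(1) k(1,2)] k(3,4) unfolding left_descent_def N_def by auto
    then show ?thesis using k by auto
  next
    case 3
    then have "w = perm_part n w"
      using delta_prod_factorization(2)[OF w(1)] delta_prod_empty unfolding N_def by simp
    define p where "p = inv (perm_part n w)"
    have ps: "perm_part n w \<in> unsigned_perms n" using delta_prod_factorization(1)[OF w(1)] .
    have "p \<noteq> id" unfolding p_def using \<open>w = perm_part n w\<close> w(2) signed_permsD(1)[OF unsigned_perms_signed[OF ps]]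
      by (metis bij_is_inj inv_id inv_inv_eq)
    then obtain i where i: "1 \<le> i" "i < int n" "p (i + 1) < p i"
      using unsigned_perms_descent_exists unsigned_perms_inv[OF ps] unfolding p_def by blast
    define k where "k = nat i"
    have k: "1 \<le> k" "k < n" "int k = i" using i unfolding k_def by auto
    have st: "(k \<in> neg_set n w) = (k + 1 \<in> neg_set n w)" using 3 unfolding N_def by simp
    have "pos_of n (neg_set n w) k = i" using 3 k unfolding N_def pos_of_def by (simp add: delta_prod_empty)
    then have "left_descent n k w"
      using gen_comp_same(5,6)[OF w(1) k(1,2) st] k i unfolding left_descent_def p_def by auto
    then show ?thesis using k by auto
  qed
qed

lemma len_B_word_le: "ws \<in> words n \<Longrightarrow> len_B n (word_eval ws) \<le> length ws"
proof (induction ws)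
  case Nil then show ?case by (simp add: word_eval_Nil len_B_id flip: id_def)
next
  case (Cons a ws)
  then have "ws \<in> words n" "a < n" unfolding words_def by auto
  then show ?case using Cons.IH len_B_gen_comp[OF word_eval_signed_perms[OF \<open>ws \<in> words n\<close>] \<open>a < n\<close>]
    unfolding word_eval_Cons length_Cons by linarith
qed

lemma word_of_len_B: "w \<in> signed_perms n \<Longrightarrow> \<exists>ws \<in> words n. length ws = len_B n w \<and> word_eval ws = w"
proof (induction "len_B n w" arbitrary: w rule: less_induct)
  case less
  show ?case
  proof (cases "w = id")
    case True
    have "[] \<in> words n" by (simp add: words_def)
    moreover have "length [] = len_B n w" using len_B_id[of n] True by simp
    moreover have "word_eval [] = w" using word_eval_Nil True by simp
    ultimately show ?thesis by blast
  next
    case False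
    then obtain a where a: "a < n" "left_descent n a w" using left_descent_exists[OF less.prems] by auto
    have l: "len_B n (gen a \<circ> w) + 1 = len_B n w" using left_descent_iff_len_B[OF less.prems a(1)] a by simp
    have s: "gen a \<circ> w \<in> signed_perms n" using signed_perms_comp[OF gen_signed_perms[OF a(1)] less.prems] .
    obtain ws where ws: "ws \<in> words n" "length ws = len_B n (gen a \<circ> w)" "word_eval ws = gen a \<circ> w"
      using less.hyps[of "gen a \<circ> w"] l s by auto
    have "a # ws \<in> words n" using ws a unfolding words_def by auto
    moreover have "word_eval (a # ws) = w" using ws by (simp add: word_eval_Cons comp_assoc[symmetric] gen_comp_gen)
    ultimately show ?thesis using ws l by (intro bexI[of _ "a # ws"]) auto
  qed
qed

lemma coxeter_length_eq_len_B: assumes "w \<in> signed_perms n" shows "coxeter_length n w = len_B n w"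
  unfolding coxeter_length_def
proof (rule Least_equality)
  show "\<exists>ws\<in>words n. length ws = len_B n w \<and> word_eval ws = w" using word_of_len_B[OF assms] .
  fix y assume "\<exists>ws\<in>words n. length ws = y \<and> word_eval ws = w"
  then show "len_B n w \<le> y" using len_B_word_le by blast
qed

lemma reduced_word_iff: "reduced_word n w ws \<longleftrightarrow> ws \<in> words n \<and> word_eval ws = w \<and> length ws = len_B n w"
  unfolding reduced_word_def using coxeter_length_eq_len_B word_eval_signed_perms by metis

lemma reduced_word_signed_perms: "reduced_word n w ws \<Longrightarrow> w \<in> signed_perms n"
  unfolding reduced_word_iff using word_eval_signed_perms by blast

lemma reduced_word_exists: "w \<in> signed_perms n \<Longrightarrow> \<exists>ws. reduced_word n w ws"
  unfolding reduced_word_iff using word_of_len_B by blast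

lemma reduced_word_ConsD:
  assumes "reduced_word n w (a # u)"
  shows "a < n" "left_descent n a w" "reduced_word n (gen a \<circ> w) u"
proof -
  have h: "a # u \<in> words n" "word_eval (a # u) = w" "length (a # u) = len_B n w" using assms unfolding reduced_word_iff by auto
  show a: "a < n" using h unfolding words_def by auto
  have u: "u \<in> words n" using h unfolding words_def by auto
  have we: "word_eval u = gen a \<circ> w" using h(2) by (auto simp: word_eval_Cons comp_assoc[symmetric] gen_comp_gen)
  have ws: "w \<in> signed_perms n" using reduced_word_signed_perms assms by blast
  have "len_B n (gen a \<circ> w) \<le> length u" using len_B_word_le[OF u] we by simp
  then have "len_B n (gen a \<circ> w) + 1 = len_B n w" using len_B_gen_comp[OF ws a] h(3) by auto
  then show "left_descent n a w" using left_descent_iff_len_B[OF ws a] by simp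
  show "reduced_word n (gen a \<circ> w) u" unfolding reduced_word_iff using u we h(3) \<open>len_B n (gen a \<circ> w) + 1 = len_B n w\<close> by simp
qed

lemma reduced_word_ConsI:
  assumes "a < n" "left_descent n a w" "reduced_word n (gen a \<circ> w) t" "w \<in> signed_perms n"
  shows "reduced_word n w (a # t)"
proof -
  have h: "t \<in> words n" "word_eval t = gen a \<circ> w" "length t = len_B n (gen a \<circ> w)" using assms(3) unfolding reduced_word_iff by auto
  have "len_B n (gen a \<circ> w) + 1 = len_B n w" using left_descent_iff_len_B[OF assms(4,1)] assms(2) by simp
  moreover have "word_eval (a # t) = w" using h by (simp add: word_eval_Cons comp_assoc[symmetric] gen_comp_gen)
  moreover have "a # t \<in> words n" using h assms(1) unfolding words_def by auto
  ultimately show ?thesis unfolding reduced_word_iff using h by simp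
qed

section \<open>Left descents\<close>

lemma inv_gen_comp: "\<pi> \<in> signed_perms n \<Longrightarrow> inv (gen i \<circ> \<pi>) = inv \<pi> \<circ> gen i"
  using o_inv_distrib[OF gen_bij signed_permsD(1)] gen_inv by metis

lemma Des_inv_iff: "\<pi> \<in> signed_perms n \<Longrightarrow> 1 \<le> i \<Longrightarrow> i < n \<Longrightarrow> int i \<in> Des_inv n \<pi> \<longleftrightarrow> inv \<pi> (int i) > inv \<pi> (int i + 1)"
  unfolding Des_inv_def by auto

lemma perm_part_signed_perms: "w \<in> signed_perms n \<Longrightarrow> perm_part n w \<in> signed_perms n"
  using delta_prod_factorization(1) unsigned_perms_signed by blast

lemma abs_inj_values_of: "inj_on (\<lambda>y. nat \<bar>y\<bar>) (values_of n N)"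
  unfolding inj_on_def values_of_def by (auto simp: abs_if split: if_splits)

lemma pos_of_not_neg:
  assumes N: "N \<subseteq> {1..n}" and k: "1 \<le> k" "k \<le> n" "k \<notin> N"
  shows "pos_of n N k = int (card (N \<union> {1..k}))"
proof -
  have kV: "int k \<in> values_of n N" using k unfolding values_of_def by auto
  have p: "1 \<le> pos_of n N k" "pos_of n N k \<le> int n" "delta_prod n N (pos_of n N k) = int k"
    using delta_prod_inv_range[OF N kV] k(3) unfolding pos_of_def by auto
  have "card {y \<in> delta_prod n N ` {1..int n}. y \<le> delta_prod n N (pos_of n N k)} = nat (pos_of n N k)"
    using incr_on_card_below[OF delta_prod_props(2)[OF N] p(1,2)] .
  then have c: "card {y \<in> values_of n N. y \<le> int k} = nat (pos_of n N k)" using p(3) delta_prod_image[OF N] by simp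
  have "(\<lambda>y. nat \<bar>y\<bar>) ` {y \<in> values_of n N. y \<le> int k} = N \<union> {1..k}"
  proof
    show "(\<lambda>y. nat \<bar>y\<bar>) ` {y \<in> values_of n N. y \<le> int k} \<subseteq> N \<union> {1..k}"
      unfolding values_of_def by (auto simp: abs_if split: if_splits)
    show "N \<union> {1..k} \<subseteq> (\<lambda>y. nat \<bar>y\<bar>) ` {y \<in> values_of n N. y \<le> int k}"
    proof
      fix j assume j: "j \<in> N \<union> {1..k}"
      show "j \<in> (\<lambda>y. nat \<bar>y\<bar>) ` {y \<in> values_of n N. y \<le> int k}"
      proof (cases "j \<in> N")
        case True
        then have "- int j \<in> {y \<in> values_of n N. y \<le> int k}" using N unfolding values_of_def by auto
        then show ?thesis by (metis (lifting) image_eqI abs_minus_cancel nat_int abs_of_nat)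
      next
        case False
        then have "int j \<in> {y \<in> values_of n N. y \<le> int k}" using j k unfolding values_of_def by auto
        then show ?thesis by (metis (lifting) image_eqI nat_int abs_of_nat)
      qed
    qed
  qed
  then have "card (N \<union> {1..k}) = card {y \<in> values_of n N. y \<le> int k}"
    using card_image[OF inj_on_subset[OF abs_inj_values_of]] by (metis (no_types, lifting) mem_Collect_eq subsetI)
  then show ?thesis using c p(1) by simp
qed

lemma pos_of_neg:
  assumes N: "N \<subseteq> {1..n}" and k: "k \<in> N" "k + 1 \<in> N"
  shows "pos_of n N k = int (card {j \<in> N. j \<ge> k + 1})"
proof -
  have kV: "- (int k + 1) \<in> values_of n N" using k N unfolding values_of_def by (auto simp: nat_add_distrib)
  have p: "1 \<le> pos_of n N k" "pos_of n N k \<le> int n" "delta_prod n N (pos_of n N k) = - (int k + 1)"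
    using delta_prod_inv_range[OF N kV] k(1) unfolding pos_of_def by auto
  have "card {y \<in> delta_prod n N ` {1..int n}. y \<le> delta_prod n N (pos_of n N k)} = nat (pos_of n N k)"
    using incr_on_card_below[OF delta_prod_props(2)[OF N] p(1,2)] .
  then have c: "card {y \<in> values_of n N. y \<le> - (int k + 1)} = nat (pos_of n N k)" using p(3) delta_prod_image[OF N] by simp
  have "(\<lambda>y. nat \<bar>y\<bar>) ` {y \<in> values_of n N. y \<le> - (int k + 1)} = {j \<in> N. j \<ge> k + 1}"
  proof
    show "(\<lambda>y. nat \<bar>y\<bar>) ` {y \<in> values_of n N. y \<le> - (int k + 1)} \<subseteq> {j \<in> N. j \<ge> k + 1}"
      unfolding values_of_def by (auto simp: abs_if split: if_splits)
    show "{j \<in> N. j \<ge> k + 1} \<subseteq> (\<lambda>y. nat \<bar>y\<bar>) ` {y \<in> values_of n N. y \<le> - (int k + 1)}"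
    proof
      fix j assume j: "j \<in> {j \<in> N. j \<ge> k + 1}"
      then have "- int j \<in> {y \<in> values_of n N. y \<le> - (int k + 1)}" using N unfolding values_of_def by auto
      then show "j \<in> (\<lambda>y. nat \<bar>y\<bar>) ` {y \<in> values_of n N. y \<le> - (int k + 1)}"
        by (metis (lifting) image_eqI abs_minus_cancel nat_int abs_of_nat)
    qed
  qed
  then have "card {j \<in> N. j \<ge> k + 1} = card {y \<in> values_of n N. y \<le> - (int k + 1)}"
    using card_image[OF inj_on_subset[OF abs_inj_values_of]] by (metis (no_types, lifting) mem_Collect_eq subsetI)
  then show ?thesis using c p(1) by simp
qed

lemma left_descent_0_iff: "w \<in> signed_perms n \<Longrightarrow> 1 \<le> n \<Longrightarrow> left_descent n 0 w \<longleftrightarrow> 1 \<in> neg_set n w"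
  using gen_0_comp(3,4)[of w n] unfolding left_descent_def by auto

lemma left_descent_mixed_iff: "w \<in> signed_perms n \<Longrightarrow> 1 \<le> k \<Longrightarrow> k < n \<Longrightarrow> (k \<in> neg_set n w) \<noteq> (k + 1 \<in> neg_set n w)
   \<Longrightarrow> left_descent n k w \<longleftrightarrow> k \<notin> neg_set n w"
  using gen_comp_mixed(3,4)[of w n k] unfolding left_descent_def by auto

lemma left_descent_same_iff:
  assumes "w \<in> signed_perms n" "1 \<le> k" "k < n" "(k \<in> neg_set n w) = (k + 1 \<in> neg_set n w)"
  shows "left_descent n k w \<longleftrightarrow> pos_of n (neg_set n w) k \<in> Des_inv n (perm_part n w)"
proof -
  have i: "1 \<le> nat (pos_of n (neg_set n w) k)" "nat (pos_of n (neg_set n w) k) < n"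
    using gen_comp_same(1,2)[OF assms] by auto
  have e: "int (nat (pos_of n (neg_set n w) k)) = pos_of n (neg_set n w) k" using i by simp
  show ?thesis using gen_comp_same(5,6)[OF assms] Des_inv_iff[OF perm_part_signed_perms[OF assms(1)] i] e unfolding left_descent_def
    by (auto split: if_splits)
qed

lemma inv_factorization:
  assumes w: "w \<in> signed_perms n"
  shows "inv w = inv (perm_part n w) \<circ> inv (delta_prod n (neg_set n w))"
proof -
  have m: "delta_prod n (neg_set n w) \<in> signed_perms n" using delta_prod_props(1)[OF neg_set_subset] .
  have "inv (delta_prod n (neg_set n w) \<circ> perm_part n w) = inv (perm_part n w) \<circ> inv (delta_prod n (neg_set n w))"
    using o_inv_distrib[OF signed_permsD(1)[OF m] signed_permsD(1)[OF perm_part_signed_perms[OF w]]] .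
  then show ?thesis using delta_prod_factorization(2)[OF w] by simp
qed

lemma inv_pos_iff:
  assumes w: "w \<in> signed_perms n" and j: "1 \<le> j" "j \<le> n"
  shows "inv w (int j) > 0 \<longleftrightarrow> j \<notin> neg_set n w"
proof -
  define N where "N = neg_set n w"
  have N: "N \<subseteq> {1..n}" unfolding N_def by (rule neg_set_subset)
  define m where "m = delta_prod n N"
  have ms: "m \<in> signed_perms n" unfolding m_def using delta_prod_props(1)[OF N] .
  define p where "p = inv (perm_part n w)"
  have pS: "p \<in> unsigned_perms n" unfolding p_def using unsigned_perms_inv[OF delta_prod_factorization(1)[OF w]] .
  have iw: "inv w = p \<circ> inv m" unfolding p_def m_def N_def using inv_factorization[OF w] .
  show ?thesis
  proof (cases "j \<in> N")
    case False
    then have "int j \<in> values_of n N" using j unfolding values_of_def by auto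
    then have "1 \<le> inv m (int j)" "inv m (int j) \<le> int n" using delta_prod_inv_range[OF N] unfolding m_def by auto
    then have "p (inv m (int j)) > 0" using unsigned_perms_range[OF pS] by force
    then show ?thesis using False iw unfolding N_def by simp
  next
    case True
    then have "- int j \<in> values_of n N" using j unfolding values_of_def by auto
    then have x: "1 \<le> inv m (- int j)" "inv m (- int j) \<le> int n" using delta_prod_inv_range[OF N] unfolding m_def by auto
    have "inv m (int j) = - inv m (- int j)" using signed_permsD(2)[OF inv_signed_perms[OF ms], of "- int j"] by simp
    moreover have "p (- inv m (- int j)) = - p (inv m (- int j))" using signed_permsD(2)[OF unsigned_perms_signed[OF pS]] by simp
    moreover have "p (inv m (- int j)) > 0" using unsigned_perms_range[OF pS] x by force
    ultimately show ?thesis using True iw unfolding N_def by simp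
  qed
qed

lemma left_descent_same_iff_inv:
  assumes w: "w \<in> signed_perms n" and k: "1 \<le> b" "b < n"
    and st: "(b \<in> neg_set n w) = (b + 1 \<in> neg_set n w)"
  shows "left_descent n b w \<longleftrightarrow> inv w (int b) > inv w (int b + 1)"
proof -
  define N where "N = neg_set n w"
  have N: "N \<subseteq> {1..n}" unfolding N_def by (rule neg_set_subset)
  define m where "m = delta_prod n N"
  have ms: "m \<in> signed_perms n" unfolding m_def using delta_prod_props(1)[OF N] .
  define p where "p = inv (perm_part n w)"
  have pS: "p \<in> unsigned_perms n"
    unfolding p_def using unsigned_perms_inv[OF delta_prod_factorization(1)[OF w]] .
  have iw: "inv w = p \<circ> inv m" unfolding p_def m_def N_def using inv_factorization[OF w] .
  define i where "i = pos_of n N b"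
  have i: "1 \<le> i" "i < int n" using pos_of_same(1,2)[OF N k st[folded N_def]] unfolding i_def by auto
  have mi: "m i = (if b \<in> N then - (int b + 1) else int b)" "m (i + 1) = (if b \<in> N then - int b else int b + 1)"
    using pos_of_same(3,4)[OF N k st[folded N_def]] unfolding i_def m_def by auto
  have im: "inv m (m x) = x" for x using signed_perms_inv_app(2)[OF ms] .
  have "left_descent n b w \<longleftrightarrow> i \<in> Des_inv n (perm_part n w)"
    using left_descent_same_iff[OF w k st] unfolding i_def N_def by simp
  also have "\<dots> \<longleftrightarrow> p i > p (i + 1)" unfolding Des_inv_def p_def using i by auto
  finally have dd: "left_descent n b w \<longleftrightarrow> p i > p (i + 1)" .
  have podd: "p (- x) = - p x" for x using signed_permsD(2)[OF unsigned_perms_signed[OF pS]] .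
  show ?thesis
  proof (cases "b \<in> N")
    case True
    have "inv m (- (int b + 1)) = i" "inv m (- int b) = i + 1" using mi im True by metis+
    then have "inv m (int b + 1) = - i" "inv m (int b) = - (i + 1)"
      using signed_permsD(2)[OF inv_signed_perms[OF ms], of "int b + 1"]
        signed_permsD(2)[OF inv_signed_perms[OF ms], of "int b"] by auto
    moreover have "p (- (i + 1)) = - p (i + 1)" "p (- i) = - p i" by (fact podd)+
    ultimately have "inv w (int b) = - p (i + 1)" "inv w (int b + 1) = - p i" using iw by auto
    then show ?thesis using dd by auto
  next
    case False
    have "inv m (int b) = i" "inv m (int b + 1) = i + 1" using mi im False by metis+
    then have "inv w (int b) = p i" "inv w (int b + 1) = p (i + 1)" using iw by auto
    then show ?thesis using dd by auto
  qed
qed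

lemma left_descent_iff:
  assumes w: "w \<in> signed_perms n" and b: "b < n"
  shows "left_descent n b w \<longleftrightarrow> (if b = 0 then inv w 1 < 0 else inv w (int b) > inv w (int b + 1))"
proof (cases "b = 0")
  case True
  have n1: "1 \<le> n" using b by simp
  have "inv w 1 > 0 \<longleftrightarrow> 1 \<notin> neg_set n w" using inv_pos_iff[OF w _ n1] by simp
  moreover have "inv w 1 \<noteq> 0" using inv_signed_perms[OF w] signed_perms_abs_bound[of "inv w" n 1] n1 by auto
  ultimately show ?thesis using left_descent_0_iff[OF w n1] True by auto
next
  case False
  then have k: "1 \<le> b" "b < n" using b by auto
  show ?thesis
  proof (cases "(b \<in> neg_set n w) = (b + 1 \<in> neg_set n w)")
    case True
    then show ?thesis using left_descent_same_iff_inv[OF w k] False by simp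
  next
    case mixed: False
    have "inv w (int b) > 0 \<longleftrightarrow> b \<notin> neg_set n w" using inv_pos_iff[OF w k(1)] k by simp
    moreover have "inv w (int b + 1) > 0 \<longleftrightarrow> b + 1 \<notin> neg_set n w"
      using inv_pos_iff[OF w, of "b + 1"] k by (simp add: add.commute)
    moreover have "inv w (int b) \<noteq> 0" "inv w (int b + 1) \<noteq> 0"
      using inv_signed_perms[OF w] signed_perms_abs_bound[of "inv w" n "int b"]
        signed_perms_abs_bound[of "inv w" n "int b + 1"] k by auto
    ultimately show ?thesis using left_descent_mixed_iff[OF w k mixed] mixed False by auto
  qed
qed

lemma left_descent_gen_comp:
  assumes w: "w \<in> signed_perms n" and ab: "a < n" "b < n" "a \<noteq> b" "a + 1 \<noteq> b" "b + 1 \<noteq> a" and d: "left_descent n b w"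
  shows "left_descent n b (gen a \<circ> w)"
proof -
  have w': "gen a \<circ> w \<in> signed_perms n" using signed_perms_comp[OF gen_signed_perms[OF ab(1)] w] .
  have iv: "inv (gen a \<circ> w) = inv w \<circ> gen a" using o_inv_distrib[OF gen_bij signed_permsD(1)[OF w]] gen_inv by simp
  show ?thesis
  proof (cases "b = 0")
    case True
    then have "gen a 1 = 1" using ab by (cases "a = 0") (auto simp: gen_apply)
    then show ?thesis using left_descent_iff[OF w ab(2)] left_descent_iff[OF w' ab(2)] d iv True by simp
  next
    case False
    have "gen a (int b) = int b" "gen a (int b + 1) = int b + 1" using ab False
      by (cases "a = 0"; auto simp: gen_0_apply gen_apply)+
    then show ?thesis using left_descent_iff[OF w ab(2)] left_descent_iff[OF w' ab(2)] d iv False by simp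
  qed
qed

section \<open>Commutation classes\<close>

lemma comm_step_Cons: "(u, v) \<in> comm_step \<Longrightarrow> (a # u, a # v) \<in> comm_step"
proof -
  assume "(u, v) \<in> comm_step"
  then obtain xs x y ys where "u = xs @ [x, y] @ ys" "v = xs @ [y, x] @ ys" "gen x \<circ> gen y = gen y \<circ> gen x"
    unfolding comm_step_def by blast
  then show ?thesis unfolding comm_step_def by (auto intro!: exI[of _ "a # xs"])
qed

lemma comm_equiv_Cons: "(u, v) \<in> comm_step\<^sup>* \<Longrightarrow> (a # u, a # v) \<in> comm_step\<^sup>*"
  by (induction rule: rtrancl_induct) (auto intro: rtrancl_into_rtrancl comm_step_Cons)

lemma comm_step_sym: "(u, v) \<in> comm_step \<Longrightarrow> (v, u) \<in> comm_step"
  unfolding comm_step_def by fastforce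

lemma comm_equiv_sym: "(u, v) \<in> comm_step\<^sup>* \<Longrightarrow> (v, u) \<in> comm_step\<^sup>*"
  by (induction rule: rtrancl_induct) (auto intro: converse_rtrancl_into_rtrancl comm_step_sym)

lemma comm_equiv_swap: "gen a \<circ> gen b = gen b \<circ> gen a \<Longrightarrow> (a # b # t, b # a # t) \<in> comm_step\<^sup>*"
  unfolding comm_step_def by (intro r_into_rtrancl) (auto intro!: exI[of _ "[]"])

definition letters_filter :: "nat \<Rightarrow> nat \<Rightarrow> nat list \<Rightarrow> nat list" where
  "letters_filter a b xs = filter (\<lambda>x. x = a \<or> x = b) xs"

lemma letters_filter_Cons:
  "letters_filter a b (c # u) = (if c = a \<or> c = b then c # letters_filter a b u else letters_filter a b u)"
  unfolding letters_filter_def by simp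

lemma letters_filter_comm_step:
  assumes "(u, v) \<in> comm_step" "gen a \<circ> gen b \<noteq> gen b \<circ> gen a"
  shows "letters_filter a b u = letters_filter a b v"
proof -
  obtain xs x y ys where h: "u = xs @ [x, y] @ ys" "v = xs @ [y, x] @ ys" "gen x \<circ> gen y = gen y \<circ> gen x"
    using assms(1) unfolding comm_step_def by blast
  have "\<not> (x \<noteq> y \<and> (x = a \<or> x = b) \<and> (y = a \<or> y = b))"
    using h(3) assms(2) by auto
  then have "filter (\<lambda>z. z = a \<or> z = b) [x, y] = filter (\<lambda>z. z = a \<or> z = b) [y, x]"
    by auto
  then show ?thesis unfolding letters_filter_def h by (simp only: filter_append)
qed

lemma letters_filter_comm_equiv:
  assumes "(u, v) \<in> comm_step\<^sup>*" "gen a \<circ> gen b \<noteq> gen b \<circ> gen a"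
  shows "letters_filter a b u = letters_filter a b v"
  using assms(1) by (induction rule: rtrancl_induct) (simp_all add: letters_filter_comm_step[OF _ assms(2)])

lemma gen_commute_if_not_adjacent:
  assumes "a \<noteq> b" "a + 1 \<noteq> b" "b + 1 \<noteq> a"
  shows "gen a \<circ> gen b = gen b \<circ> gen a"
  using assms gen_commute[of a b] gen_commute[of b a] by (cases "a < b") auto

lemma FC_B_if_descent_closed:
  assumes w: "w \<in> signed_perms n" "P w"
    and descent_closed: "\<And>w a. w \<in> signed_perms n \<Longrightarrow> P w \<Longrightarrow> a < n \<Longrightarrow> left_descent n a w \<Longrightarrow> P (gen a \<circ> w)"
    and no_adjacent: "\<And>w a. w \<in> signed_perms n \<Longrightarrow> P w \<Longrightarrow> a + 1 < n \<Longrightarrow>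
      left_descent n a w \<Longrightarrow> left_descent n (a + 1) w \<Longrightarrow> False"
  shows "w \<in> FC_B n"
  using w
proof (induction "len_B n w" arbitrary: w rule: less_induct)
  case less
  have "(u, v) \<in> comm_step\<^sup>*" if uv: "reduced_word n w u" "reduced_word n w v" for u v
  proof (cases u)
    case Nil
    then show ?thesis using uv unfolding reduced_word_iff by simp
  next
    case (Cons a u')
    then obtain b v' where v: "v = b # v'" using uv unfolding reduced_word_iff by (cases v) auto
    have a: "a < n" "left_descent n a w" "reduced_word n (gen a \<circ> w) u'"
      using reduced_word_ConsD uv(1) Cons by blast+
    have b: "b < n" "left_descent n b w" "reduced_word n (gen b \<circ> w) v'"
      using reduced_word_ConsD uv(2) v by blast+
    have wa: "gen a \<circ> w \<in> signed_perms n" "P (gen a \<circ> w)" "len_B n (gen a \<circ> w) < len_B n w"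
      using signed_perms_comp[OF gen_signed_perms[OF a(1)] less.prems(1)] descent_closed[OF less.prems a(1,2)]
        a(2) unfolding left_descent_def by auto
    have wb: "gen b \<circ> w \<in> signed_perms n" "P (gen b \<circ> w)" "len_B n (gen b \<circ> w) < len_B n w"
      using signed_perms_comp[OF gen_signed_perms[OF b(1)] less.prems(1)] descent_closed[OF less.prems b(1,2)]
        b(2) unfolding left_descent_def by auto
    have IHa: "(u', t) \<in> comm_step\<^sup>*" if "reduced_word n (gen a \<circ> w) t" for t
      using less.hyps[OF wa(3) wa(1,2)] a(3) that unfolding FC_B_def by blast
    have IHb: "(v', t) \<in> comm_step\<^sup>*" if "reduced_word n (gen b \<circ> w) t" for t
      using less.hyps[OF wb(3) wb(1,2)] b(3) that unfolding FC_B_def by blast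
    show ?thesis
    proof (cases "a = b")
      case True
      then show ?thesis using Cons v IHa b(3) comm_equiv_Cons by simp
    next
      case False
      have "a + 1 \<noteq> b" "b + 1 \<noteq> a"
        using no_adjacent[OF less.prems] a b by auto
      then have cm: "gen a \<circ> gen b = gen b \<circ> gen a" and
        ab: "left_descent n b (gen a \<circ> w)" "left_descent n a (gen b \<circ> w)"
        using False gen_commute_if_not_adjacent left_descent_gen_comp[OF less.prems(1)] a b by auto
      obtain t where t: "reduced_word n (gen b \<circ> (gen a \<circ> w)) t"
        using reduced_word_exists[OF signed_perms_comp[OF gen_signed_perms[OF b(1)] wa(1)]] by blast
      have "gen b \<circ> (gen a \<circ> w) = gen a \<circ> (gen b \<circ> w)" by (simp only: comp_assoc[symmetric] cm)
      then have "reduced_word n (gen a \<circ> w) (b # t)" "reduced_word n (gen b \<circ> w) (a # t)"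
        using reduced_word_ConsI[OF b(1) ab(1) t wa(1)] reduced_word_ConsI[OF a(1) ab(2) _ wb(1)] t by auto
      then have "(a # u', a # b # t) \<in> comm_step\<^sup>*" "(b # a # t, b # v') \<in> comm_step\<^sup>*"
        using comm_equiv_Cons IHa IHb comm_equiv_sym by blast+
      then show ?thesis using comm_equiv_swap[OF cm] Cons v by (meson rtrancl_trans)
    qed
  qed
  then show ?case using less.prems(1) unfolding FC_B_def by blast
qed

lemma not_FC_B_if_not_recovered:
  assumes w: "w \<in> signed_perms n" "\<not> P w"
    and recovered: "\<And>w. w \<in> signed_perms n \<Longrightarrow>
      (\<And>a. a < n \<Longrightarrow> left_descent n a w \<Longrightarrow> P (gen a \<circ> w)) \<Longrightarrow>
      (\<And>a. a + 1 < n \<Longrightarrow> left_descent n a w \<Longrightarrow> left_descent n (a + 1) w \<Longrightarrow> False) \<Longrightarrow> P w"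
  shows "\<exists>u v a b. reduced_word n w u \<and> reduced_word n w v \<and>
    gen a \<circ> gen b \<noteq> gen b \<circ> gen a \<and> letters_filter a b u \<noteq> letters_filter a b v"
  using w
proof (induction "len_B n w" arbitrary: w rule: less_induct)
  case less
  note w = less.prems(1)
  consider (inherited) a where "a < n" "left_descent n a w" "\<not> P (gen a \<circ> w)"
    | (adjacent) a where "a + 1 < n" "left_descent n a w" "left_descent n (a + 1) w"
    using recovered[OF w] less.prems(2) by blast
  then show ?case
  proof cases
    case inherited
    have "gen a \<circ> w \<in> signed_perms n" "len_B n (gen a \<circ> w) < len_B n w"
      using signed_perms_comp[OF gen_signed_perms[OF inherited(1)] w] inherited(2)
      unfolding left_descent_def by auto
    then obtain u v b c where h: "reduced_word n (gen a \<circ> w) u" "reduced_word n (gen a \<circ> w) v"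
      "gen b \<circ> gen c \<noteq> gen c \<circ> gen b" "letters_filter b c u \<noteq> letters_filter b c v"
      using less.hyps inherited(3) by blast
    have "reduced_word n w (a # u)" "reduced_word n w (a # v)"
      using reduced_word_ConsI[OF inherited(1,2) _ w] h by auto
    moreover have "letters_filter b c (a # u) \<noteq> letters_filter b c (a # v)"
      using h(4) by (simp add: letters_filter_Cons)
    ultimately show ?thesis using h(3) by blast
  next
    case adjacent
    have a: "a < n" using adjacent by simp
    obtain t1 where "reduced_word n (gen a \<circ> w) t1"
      using reduced_word_exists[OF signed_perms_comp[OF gen_signed_perms[OF a] w]] by blast
    then have "reduced_word n w (a # t1)" using reduced_word_ConsI[OF a adjacent(2) _ w] by blast
    moreover obtain t2 where "reduced_word n (gen (a + 1) \<circ> w) t2"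
      using reduced_word_exists[OF signed_perms_comp[OF gen_signed_perms[OF adjacent(1)] w]] by blast
    then have "reduced_word n w ((a + 1) # t2)" using reduced_word_ConsI[OF adjacent(1,3) _ w] by blast
    moreover have "letters_filter a (a + 1) (a # t1) \<noteq> letters_filter a (a + 1) ((a + 1) # t2)"
      by (simp add: letters_filter_Cons)
    ultimately show ?thesis using gen_Suc_not_commute[of a] by blast
  qed
qed

lemma FC_B_iff_descent_recursive:
  assumes w: "w \<in> signed_perms n"
    and descent_closed: "\<And>w a. w \<in> signed_perms n \<Longrightarrow> P w \<Longrightarrow> a < n \<Longrightarrow> left_descent n a w \<Longrightarrow> P (gen a \<circ> w)"
    and no_adjacent: "\<And>w a. w \<in> signed_perms n \<Longrightarrow> P w \<Longrightarrow> a + 1 < n \<Longrightarrow>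
      left_descent n a w \<Longrightarrow> left_descent n (a + 1) w \<Longrightarrow> False"
    and recovered: "\<And>w. w \<in> signed_perms n \<Longrightarrow>
      (\<And>a. a < n \<Longrightarrow> left_descent n a w \<Longrightarrow> P (gen a \<circ> w)) \<Longrightarrow>
      (\<And>a. a + 1 < n \<Longrightarrow> left_descent n a w \<Longrightarrow> left_descent n (a + 1) w \<Longrightarrow> False) \<Longrightarrow> P w"
  shows "w \<in> FC_B n \<longleftrightarrow> P w"
proof
  assume FC: "w \<in> FC_B n"
  show "P w"
  proof (rule ccontr)
    assume "\<not> P w"
    then have "\<exists>u v a b. reduced_word n w u \<and> reduced_word n w v \<and>
        gen a \<circ> gen b \<noteq> gen b \<circ> gen a \<and> letters_filter a b u \<noteq> letters_filter a b v"
      by (rule not_FC_B_if_not_recovered[OF w]) (rule recovered)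
    then show False using FC letters_filter_comm_equiv unfolding FC_B_def by blast
  qed
next
  assume "P w"
  then show "w \<in> FC_B n"
    by (rule FC_B_if_descent_closed[OF w]) (rule descent_closed no_adjacent; assumption)+
qed

section \<open>Admissible pairs \<open>(N, \<pi>)\<close>\<close>

definition avoids_321 :: "nat \<Rightarrow> (int \<Rightarrow> int) \<Rightarrow> bool" where
  "avoids_321 n p \<longleftrightarrow> \<not> (\<exists>a b c. 1 \<le> a \<and> a < b \<and> b < c \<and> c \<le> int n \<and> p a > p b \<and> p b > p c)"

definition admissible :: "nat \<Rightarrow> nat set \<Rightarrow> (int \<Rightarrow> int) \<Rightarrow> bool" where
  "admissible n N \<pi> \<longleftrightarrow> avoids_321 n (inv \<pi>) \<and> N \<subseteq> {1..first_valley n \<pi>} \<and> (1 \<in> Des_inv n \<pi> \<longrightarrow> card N \<le> 1)"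

definition admissible_elem :: "nat \<Rightarrow> (int \<Rightarrow> int) \<Rightarrow> bool" where
  "admissible_elem n w \<longleftrightarrow> admissible n (neg_set n w) (perm_part n w)"

lemma Des_inv_finite: "finite (Des_inv n \<pi>)"
proof -
  have "Des_inv n \<pi> \<subseteq> {1..int n}" unfolding Des_inv_def by auto
  then show ?thesis by (rule finite_subset) simp
qed

lemma first_valley_le: "first_valley n \<pi> \<le> n"
proof (cases "Des_inv n \<pi> - {1} \<noteq> {}")
  case True
  have "Min (Des_inv n \<pi> - {1}) \<in> Des_inv n \<pi> - {1}" using Min_in[OF finite_Diff[OF Des_inv_finite] True] .
  then have "Min (Des_inv n \<pi> - {1}) \<le> int n" unfolding Des_inv_def by auto
  then show ?thesis unfolding first_valley_def using True by simp
next
  case False then show ?thesis unfolding first_valley_def by simp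
qed

lemma first_valley_le_Des: "j \<in> Des_inv n \<pi> \<Longrightarrow> j \<noteq> 1 \<Longrightarrow> int (first_valley n \<pi>) \<le> j"
proof -
  assume h: "j \<in> Des_inv n \<pi>" "j \<noteq> 1"
  then have ne: "Des_inv n \<pi> - {1} \<noteq> {}" by auto
  have "Min (Des_inv n \<pi> - {1}) \<le> j" using h by (intro Min_le[OF finite_Diff[OF Des_inv_finite]]) auto
  moreover have "Min (Des_inv n \<pi> - {1}) \<in> Des_inv n \<pi> - {1}" using Min_in[OF finite_Diff[OF Des_inv_finite] ne] .
  moreover then have "Min (Des_inv n \<pi> - {1}) \<ge> 1" unfolding Des_inv_def by auto
  ultimately show ?thesis unfolding first_valley_def using ne by simp
qed

lemma first_valley_Des: "first_valley n \<pi> < n \<Longrightarrow> int (first_valley n \<pi>) \<in> Des_inv n \<pi> \<and> first_valley n \<pi> \<ge> 2"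
proof -
  assume h: "first_valley n \<pi> < n"
  then have ne: "Des_inv n \<pi> - {1} \<noteq> {}" unfolding first_valley_def by (auto split: if_splits)
  have m: "Min (Des_inv n \<pi> - {1}) \<in> Des_inv n \<pi> - {1}" using Min_in[OF finite_Diff[OF Des_inv_finite] ne] .
  then have "Min (Des_inv n \<pi> - {1}) \<ge> 2" unfolding Des_inv_def by auto
  then show ?thesis using m ne unfolding first_valley_def by simp
qed

lemma first_valley_geI:
  assumes "M \<le> n" "\<And>j. j \<in> Des_inv n \<pi> \<Longrightarrow> j \<noteq> 1 \<Longrightarrow> int M \<le> j"
  shows "M \<le> first_valley n \<pi>"
proof (cases "first_valley n \<pi> < n")
  case True
  then show ?thesis using first_valley_Des[OF True] assms(2) by fastforce
next
  case False then show ?thesis using assms(1) by simp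
qed

lemma first_valley_ge_1: "1 \<le> n \<Longrightarrow> 1 \<le> first_valley n \<pi>"
  using first_valley_Des[of n \<pi>] by (cases "first_valley n \<pi> < n") auto

lemma Des_inv_gen_comp:
  assumes "\<pi> \<in> signed_perms n" "1 \<le> i" "i < n" "j \<in> Des_inv n (gen i \<circ> \<pi>)" "j \<noteq> int i - 1" "j \<noteq> int i" "j \<noteq> int i + 1"
  shows "j \<in> Des_inv n \<pi>"
proof -
  have "gen i j = j" "gen i (j + 1) = j + 1" using assms(2,4-7) unfolding Des_inv_def by (auto simp: gen_apply)
  then show ?thesis using assms(4) unfolding Des_inv_def inv_gen_comp[OF assms(1)] by auto
qed

lemma Des_inv_gen_comp_self:
  assumes "\<pi> \<in> signed_perms n" "1 \<le> i" "i < n" "inv \<pi> (int i) > inv \<pi> (int i + 1)"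
  shows "int i \<notin> Des_inv n (gen i \<circ> \<pi>)"
  using assms unfolding Des_inv_def inv_gen_comp[OF assms(1)] by (auto simp: gen_apply)

lemma pattern_321_gen_comp:
  assumes i: "1 \<le> i" "i < n"
    and abc: "1 \<le> a" "a < b" "b < c" "c \<le> int n" "q a > q b" "q b > q c"
    and ne: "(a, b) \<noteq> (int i, int i + 1)" "(b, c) \<noteq> (int i, int i + 1)"
  shows "\<not> avoids_321 n (q \<circ> gen i)"
proof -
  have "gen i a < gen i b" using gen_strict_mono[of i a b] i abc ne by auto
  moreover have "gen i b < gen i c" using gen_strict_mono[of i b c] i abc ne by auto
  moreover have "1 \<le> gen i a" "gen i c \<le> int n" using gen_range[OF i] abc by auto
  moreover have "(q \<circ> gen i) (gen i a) > (q \<circ> gen i) (gen i b)" "(q \<circ> gen i) (gen i b) > (q \<circ> gen i) (gen i c)"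
    using abc gen_gen by auto
  ultimately show ?thesis unfolding avoids_321_def by blast
qed

lemma avoids_321_gen_comp:
  assumes i: "1 \<le> i" "i < n" and av: "avoids_321 n p" and d: "p (int i) > p (int i + 1)"
  shows "avoids_321 n (p \<circ> gen i)"
proof (rule ccontr)
  assume "\<not> avoids_321 n (p \<circ> gen i)"
  then obtain a b c where abc: "1 \<le> a" "a < b" "b < c" "c \<le> int n" "(p \<circ> gen i) a > (p \<circ> gen i) b" "(p \<circ> gen i) b > (p \<circ> gen i) c"
    unfolding avoids_321_def by blast
  have g: "gen i (int i) = int i + 1" "gen i (int i + 1) = int i" using i by (auto simp: gen_apply)
  have "(a, b) \<noteq> (int i, int i + 1)" using abc(5) g d by auto
  moreover have "(b, c) \<noteq> (int i, int i + 1)" using abc(6) g d by auto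
  ultimately have "\<not> avoids_321 n ((p \<circ> gen i) \<circ> gen i)" using pattern_321_gen_comp[OF i abc] by blast
  then show False using av by (simp add: comp_assoc gen_comp_gen)
qed

lemma descent_between:
  fixes p :: "int \<Rightarrow> int"
  assumes "1 \<le> a" "a < b" "b \<le> int n" "p a > p b"
  shows "\<exists>i. a \<le> i \<and> i < b \<and> p i > p (i + 1)"
proof (rule ccontr)
  assume nt: "\<not> ?thesis"
  have h: "p i \<le> p (i + 1)" if "a \<le> i" "i < b" for i
  proof (rule ccontr)
    assume "\<not> p i \<le> p (i + 1)"
    then have "p i > p (i + 1)" by simp
    then have "\<exists>i. a \<le> i \<and> i < b \<and> p i > p (i + 1)" using that by (intro exI[of _ i]) simp
    then show False using nt by simp
  qed
  have "a + int m \<le> b \<longrightarrow> p a \<le> p (a + int m)" for m :: nat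
  proof (induction m)
    case 0 then show ?case by simp
  next
    case (Suc m)
    have e: "a + int (Suc m) = a + int m + 1" by simp
    show ?case unfolding e using Suc h[of "a + int m"] by auto
  qed
  from this[of "nat (b - a)"] show False using assms by simp
qed


lemma card_le_of_subset_atLeastAtMost: "N \<subseteq> {1..v} \<Longrightarrow> card N \<le> v"
  using card_mono[of "{1..v}" N] by simp

lemma pos_of_neg_not_Des:
  assumes C: "admissible n N \<pi>" and N: "N \<subseteq> {1..n}" and k: "k \<in> N" "k + 1 \<in> N"
  shows "pos_of n N k \<notin> Des_inv n \<pi>"
proof
  assume iD: "pos_of n N k \<in> Des_inv n \<pi>"
  have fN: "finite N" using finite_subset[OF N] by simp
  have c2: "card N \<ge> 2"
  proof -
    have "{k, k+1} \<subseteq> N" using k by auto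
    then have "card {k, k+1} \<le> card N" using card_mono fN by blast
    then show ?thesis by simp
  qed
  then have n1: "1 \<notin> Des_inv n \<pi>" using C unfolding admissible_def by auto
  have pv: "pos_of n N k = int (card {j \<in> N. j \<ge> k + 1})" using pos_of_neg[OF N k] .
  have "k \<notin> {j \<in> N. j \<ge> k + 1}" by simp
  then have "{j \<in> N. j \<ge> k + 1} \<subset> N" using k(1) by blast
  then have "card {j \<in> N. j \<ge> k + 1} < card N" using psubset_card_mono[OF fN] by blast
  moreover have "pos_of n N k \<noteq> 1" using iD n1 by auto
  then have "int (first_valley n \<pi>) \<le> pos_of n N k" using first_valley_le_Des[OF iD] by simp
  moreover have "card N \<le> first_valley n \<pi>" using C card_le_of_subset_atLeastAtMost unfolding admissible_def by blast
  ultimately show False using pv by linarith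
qed

lemma neg_set_below_if_Des:
  assumes C: "admissible n N \<pi>" and N: "N \<subseteq> {1..n}" and k: "1 \<le> k" "k < n" "k \<notin> N" "k + 1 \<notin> N"
    and iD: "pos_of n N k \<in> Des_inv n \<pi>"
  shows "\<forall>j\<in>N. j < k" "pos_of n N k = int k"
proof -
  have fN: "finite N" using finite_subset[OF N] by simp
  have pv: "pos_of n N k = int (card (N \<union> {1..k}))" using pos_of_not_neg[OF N k(1) _ k(3)] k(2) by simp
  show a: "\<forall>j\<in>N. j < k"
  proof (rule ccontr)
    assume "\<not> (\<forall>j\<in>N. j < k)"
    then have ne: "N \<noteq> {}" by auto
    define M where "M = Max N"
    have MN: "M \<in> N" unfolding M_def using Max_in[OF fN ne] .
    have Mge: "\<forall>j\<in>N. j \<le> M" unfolding M_def using Max_ge[OF fN] by auto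
    have kM: "k < M" using \<open>\<not> (\<forall>j\<in>N. j < k)\<close> Mge k(3) by (metis le_neq_implies_less linorder_not_less order_trans)
    have k1M: "k + 1 < M" using kM MN k(4) by (metis Suc_eq_plus1 Suc_lessI)
    have sub: "N \<union> {1..k} \<subseteq> {1..M} - {k+1}" using Mge N k(4) kM by auto
    have "card (N \<union> {1..k}) \<le> card ({1..M} - {k+1})" using card_mono[OF _ sub] by simp
    then have c1: "card (N \<union> {1..k}) \<le> M - 1" using k1M by simp
    have "{k, M} \<subseteq> N \<union> {1..k}" using MN k by auto
    then have "card {k, M} \<le> card (N \<union> {1..k})" using card_mono fN by (metis finite_UnI finite_atLeastAtMost)
    then have c2: "card (N \<union> {1..k}) \<ge> 2" using kM by simp
    have "pos_of n N k \<noteq> 1" using pv c2 by simp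
    then have "int (first_valley n \<pi>) \<le> pos_of n N k" using first_valley_le_Des[OF iD] by simp
    moreover have "M \<le> first_valley n \<pi>" using C MN unfolding admissible_def by auto
    ultimately show False using pv c1 kM by linarith
  qed
  then have "N \<subseteq> {1..k}" using N by (meson atLeastAtMost_iff less_imp_le subset_iff)
  then have "N \<union> {1..k} = {1..k}" by blast
  then show "pos_of n N k = int k" using pv by simp
qed

lemma admissible_remove_1: "admissible n N \<pi> \<Longrightarrow> admissible n (N - {1}) \<pi>"
proof -
  assume C: "admissible n N \<pi>"
  have "card (N - {1}) \<le> card N" by (metis card_Diff1_le card.infinite diff_le_self empty_iff finite_Diff2)
  then show ?thesis using C unfolding admissible_def by auto
qed

lemma card_insert_Diff_swap: "finite N \<Longrightarrow> k \<notin> N \<Longrightarrow> j \<in> N \<Longrightarrow> card (insert k (N - {j})) = card N"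
  by (simp add: card_insert_if card_Diff_singleton) (metis One_nat_def Suc_pred card_gt_0_iff empty_iff)

lemma admissible_swap_neg: "admissible n N \<pi> \<Longrightarrow> N \<subseteq> {1..n} \<Longrightarrow> 1 \<le> k \<Longrightarrow> k \<notin> N \<Longrightarrow> k + 1 \<in> N \<Longrightarrow> admissible n (insert k (N - {k+1})) \<pi>"
proof -
  assume C: "admissible n N \<pi>" and N: "N \<subseteq> {1..n}" and k: "1 \<le> k" "k \<notin> N" "k + 1 \<in> N"
  have fN: "finite N" using finite_subset[OF N] by simp
  have "card (insert k (N - {k+1})) = card N" using card_insert_Diff_swap[OF fN k(2,3)] .
  moreover have "insert k (N - {k+1}) \<subseteq> {1..first_valley n \<pi>}" using C k unfolding admissible_def by auto
  ultimately show ?thesis using C unfolding admissible_def by auto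
qed

lemma first_valley_gen_comp_ge:
  assumes ps: "\<pi> \<in> signed_perms n" and k: "1 \<le> k" "k < n"
    and d: "inv \<pi> (int k) > inv \<pi> (int k + 1)"
    and j: "j < k" "j \<le> first_valley n \<pi>"
  shows "j \<le> first_valley n (gen k \<circ> \<pi>)"
proof (rule first_valley_geI)
  show "j \<le> n" using j k by simp
  fix d
  assume dD: "d \<in> Des_inv n (gen k \<circ> \<pi>)" "d \<noteq> 1"
  show "int j \<le> d"
  proof (cases "d = int k - 1 \<or> d = int k \<or> d = int k + 1")
    case True
    have "d \<noteq> int k" using Des_inv_gen_comp_self[OF ps k d] dD by auto
    then show ?thesis using True j by auto
  next
    case False
    then have "d \<in> Des_inv n \<pi>" using Des_inv_gen_comp[OF ps k dD(1)] by auto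
    then have "int (first_valley n \<pi>) \<le> d" using first_valley_le_Des dD(2) by blast
    then show ?thesis using j by linarith
  qed
qed

lemma admissible_gen_comp:
  assumes C: "admissible n N \<pi>" and N: "N \<subseteq> {1..n}" and ps: "\<pi> \<in> signed_perms n"
    and k: "1 \<le> k" "k < n" "(k \<in> N) = (k + 1 \<in> N)" and iD: "pos_of n N k \<in> Des_inv n \<pi>"
  shows "admissible n N (gen (nat (pos_of n N k)) \<circ> \<pi>)"
proof -
  have out: "k \<notin> N" "k + 1 \<notin> N" using pos_of_neg_not_Des[OF C N] iD k(3) by auto
  have below: "\<forall>j\<in>N. j < k" and pk: "pos_of n N k = int k" using neg_set_below_if_Des[OF C N k(1,2) out iD] by auto
  have nk: "nat (pos_of n N k) = k" using pk by simp
  have kD: "int k \<in> Des_inv n \<pi>" using iD pk by simp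
  have d: "inv \<pi> (int k) > inv \<pi> (int k + 1)" using Des_inv_iff[OF ps k(1,2)] kD by simp
  have av: "avoids_321 n (inv (gen k \<circ> \<pi>))" unfolding inv_gen_comp[OF ps]
    using avoids_321_gen_comp[OF k(1,2) _ d] C unfolding admissible_def by simp
  have sub: "N \<subseteq> {1..first_valley n (gen k \<circ> \<pi>)}"
    using first_valley_gen_comp_ge[OF ps k(1,2) d] below C N unfolding admissible_def by fastforce
  have c: "1 \<in> Des_inv n (gen k \<circ> \<pi>) \<longrightarrow> card N \<le> 1"
  proof
    assume h: "1 \<in> Des_inv n (gen k \<circ> \<pi>)"
    show "card N \<le> 1"
    proof (cases "(1::int) = int k - 1 \<or> (1::int) = int k \<or> (1::int) = int k + 1")
      case True
      have "(1::int) \<noteq> int k" using Des_inv_gen_comp_self[OF ps k(1,2) d] h by auto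
      then have "k = 2" using True k(1) by auto
      have "N \<subseteq> {1}"
      proof
        fix j assume jN: "j \<in> N"
        have "1 \<le> j" using subsetD[OF N jN] by simp
        moreover have "j < 2" using below jN \<open>k = 2\<close> by auto
        ultimately show "j \<in> {1}" by simp
      qed
      then show ?thesis using card_mono[of "{1}" N] by simp
    next
      case False
      then have "1 \<in> Des_inv n \<pi>" using Des_inv_gen_comp[OF ps k(1,2) h] by auto
      then show ?thesis using C unfolding admissible_def by auto
    qed
  qed
  show ?thesis using av sub c nk unfolding admissible_def by simp
qed

lemma admissible_elem_left_descent:
  assumes w: "w \<in> signed_perms n" and C: "admissible_elem n w" and a: "a < n" and d: "left_descent n a w"
  shows "admissible_elem n (gen a \<circ> w)"
proof -
  define N where "N = neg_set n w"
  have N: "N \<subseteq> {1..n}" unfolding N_def by (rule neg_set_subset)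
  have Cw: "admissible n N (perm_part n w)" using C unfolding admissible_elem_def N_def .
  show ?thesis
  proof (cases "a = 0")
    case True
    have n1: "1 \<le> n" using a True by simp
    have "1 \<in> N" using left_descent_0_iff[OF w n1] d True unfolding N_def by simp
    then show ?thesis using gen_0_comp(1,2)[OF w n1] admissible_remove_1[OF Cw] True unfolding admissible_elem_def N_def by simp
  next
    case False
    then have k: "1 \<le> a" by simp
    show ?thesis
    proof (cases "(a \<in> N) = (a + 1 \<in> N)")
      case True
      have iD: "pos_of n N a \<in> Des_inv n (perm_part n w)" using left_descent_same_iff[OF w k a] True d unfolding N_def by simp
      show ?thesis using gen_comp_same(3,4)[OF w k a] True admissible_gen_comp[OF Cw N perm_part_signed_perms[OF w] k a True iD]
        unfolding admissible_elem_def N_def by simp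
    next
      case False
      then have "a \<notin> N" "a + 1 \<in> N" using left_descent_mixed_iff[OF w k a] d unfolding N_def by auto
      then show ?thesis using gen_comp_mixed(1,2)[OF w k a] admissible_swap_neg[OF Cw N k] unfolding admissible_elem_def N_def by simp
    qed
  qed
qed

lemma left_descent_neg_pair:
  assumes w: "w \<in> signed_perms n" and C: "admissible_elem n w" and k: "1 \<le> k" "k < n" and kN: "k + 1 \<in> neg_set n w"
  shows "\<not> left_descent n k w \<or> k \<notin> neg_set n w"
proof -
  have Cw: "admissible n (neg_set n w) (perm_part n w)" using C unfolding admissible_elem_def .
  show ?thesis
  proof (cases "k \<in> neg_set n w")
    case True
    then have "pos_of n (neg_set n w) k \<notin> Des_inv n (perm_part n w)" using pos_of_neg_not_Des[OF Cw neg_set_subset True kN] by simp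
    then show ?thesis using left_descent_same_iff[OF w k] True kN by simp
  next
    case False then show ?thesis by simp
  qed
qed

lemma left_descent_cases:
  assumes w: "w \<in> signed_perms n" and C: "admissible_elem n w" and k: "1 \<le> k" "k < n" and d: "left_descent n k w"
  shows "(k \<notin> neg_set n w \<and> k + 1 \<in> neg_set n w) \<or>
         (k \<notin> neg_set n w \<and> k + 1 \<notin> neg_set n w \<and> (\<forall>j\<in>neg_set n w. j < k) \<and> int k \<in> Des_inv n (perm_part n w))"
proof -
  have Cw: "admissible n (neg_set n w) (perm_part n w)" using C unfolding admissible_elem_def .
  show ?thesis
  proof (cases "(k \<in> neg_set n w) = (k + 1 \<in> neg_set n w)")
    case True
    have iD: "pos_of n (neg_set n w) k \<in> Des_inv n (perm_part n w)" using left_descent_same_iff[OF w k True] d by simp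
    have out: "k \<notin> neg_set n w" "k + 1 \<notin> neg_set n w" using pos_of_neg_not_Des[OF Cw neg_set_subset] iD True by auto
    show ?thesis using neg_set_below_if_Des[OF Cw neg_set_subset k out iD] out iD by auto
  next
    case False
    then show ?thesis using left_descent_mixed_iff[OF w k False] d by auto
  qed
qed

lemma admissible_elem_no_adjacent_descents:
  assumes w: "w \<in> signed_perms n" and C: "admissible_elem n w" and a: "a + 1 < n" and d: "left_descent n a w" "left_descent n (a+1) w"
  shows False
proof (cases "a = 0")
  case True
  have n1: "1 \<le> n" using a by simp
  have "1 \<in> neg_set n w" using left_descent_0_iff[OF w n1] d(1) True by simp
  moreover have k: "1 \<le> (1::nat)" "1 < n" using a True by auto
  ultimately show False
  proof (cases "2 \<in> neg_set n w")
    case True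
    then show False using left_descent_neg_pair[OF w C k] \<open>1 \<in> neg_set n w\<close> d(2) \<open>a = 0\<close> by (simp add: numeral_2_eq_2)
  next
    case False
    then show False using left_descent_mixed_iff[OF w k] \<open>1 \<in> neg_set n w\<close> d(2) \<open>a = 0\<close> by (simp add: numeral_2_eq_2)
  qed
next
  case False
  then have k: "1 \<le> a" "a < n" using a by auto
  have k1: "1 \<le> a + 1" "a + 1 < n" using a by auto
  have Cw: "admissible n (neg_set n w) (perm_part n w)" using C unfolding admissible_elem_def .
  from left_descent_cases[OF w C k d(1)] show False
  proof
    assume h: "a \<notin> neg_set n w \<and> a + 1 \<in> neg_set n w"
    from left_descent_cases[OF w C k1 d(2)] show False using h by auto
  next
    assume h: "a \<notin> neg_set n w \<and> a + 1 \<notin> neg_set n w \<and> (\<forall>j\<in>neg_set n w. j < a) \<and> int a \<in> Des_inv n (perm_part n w)"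
    from left_descent_cases[OF w C k1 d(2)] have h2: "int (a + 1) \<in> Des_inv n (perm_part n w)" using h by auto
    have p: "perm_part n w \<in> signed_perms n" using perm_part_signed_perms[OF w] .
    have "inv (perm_part n w) (int a) > inv (perm_part n w) (int a + 1)" using Des_inv_iff[OF p k] h by simp
    moreover have "inv (perm_part n w) (int a + 1) > inv (perm_part n w) (int a + 2)" using Des_inv_iff[OF p k1] h2 by (simp add: add.commute)
    moreover have "avoids_321 n (inv (perm_part n w))" using Cw unfolding admissible_def by simp
    moreover have "1 \<le> int a" "int a + 2 \<le> int n" using k a by auto
    ultimately show False unfolding avoids_321_def
      apply (elim notE)
      apply (rule exI[of _ "int a"], rule exI[of _ "int a + 1"], rule exI[of _ "int a + 2"])
      by simp
  qed
qed

lemma avoids_321_if_descents: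
  assumes desc_avoid: "\<And>k. 1 \<le> k \<Longrightarrow> k < n \<Longrightarrow> p (int k) > p (int k + 1) \<Longrightarrow> avoids_321 n (p \<circ> gen k)"
    and no_adjacent: "\<And>k. 1 \<le> k \<Longrightarrow> k + 1 < n \<Longrightarrow> p (int k) > p (int k + 1) \<Longrightarrow>
      p (int k + 1) > p (int k + 2) \<Longrightarrow> False"
  shows "avoids_321 n p"
proof (rule ccontr)
  assume "\<not> avoids_321 n p"
  then obtain a b c where abc: "1 \<le> a" "a < b" "b < c" "c \<le> int n" "p a > p b" "p b > p c"
    unfolding avoids_321_def by blast
  \<comment> \<open>Swapping at a descent that is not a step of the pattern keeps a 321 pattern.\<close>
  have pattern_step: "(x, y) = (int k, int k + 1)"
    if "(x, y) = (a, b) \<or> (x, y) = (b, c)" "1 \<le> k" "k < n" "x \<le> int k" "int k < y" "p (int k) > p (int k + 1)" for x y k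
  proof (rule ccontr)
    assume "(x, y) \<noteq> (int k, int k + 1)"
    moreover have "(a, b) \<noteq> (int k, int k + 1) \<or> (b, c) \<noteq> (int k, int k + 1)" using abc by auto
    ultimately have "(a, b) \<noteq> (int k, int k + 1)" "(b, c) \<noteq> (int k, int k + 1)" using that abc by auto
    then show False using pattern_321_gen_comp[OF that(2,3) abc] desc_avoid[OF that(2,3,6)] by blast
  qed
  obtain i where i: "a \<le> i" "i < b" "p i > p (i + 1)" using descent_between[of a b n p] abc by auto
  obtain i' where i': "b \<le> i'" "i' < c" "p i' > p (i' + 1)" using descent_between[of b c n p] abc by auto
  have "(a, b) = (i, i + 1)" using pattern_step[of a b "nat i"] i abc by auto
  moreover have "(b, c) = (i', i' + 1)" using pattern_step[of b c "nat i'"] i' abc by auto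
  ultimately have bc: "b = a + 1" "c = a + 2" by auto
  have "int (nat a + 1) < int n" using abc(1,4) bc(2) by simp
  then have "nat a + 1 < n" by linarith
  then show False using no_adjacent[of "nat a"] abc bc by (simp add: add.assoc Suc_le_eq)
qed

lemma admissible_elem_if_no_neg:
  assumes w: "w \<in> signed_perms n" and N0: "neg_set n w = {}"
    and H1: "\<And>a. a < n \<Longrightarrow> left_descent n a w \<Longrightarrow> admissible_elem n (gen a \<circ> w)"
    and H2: "\<And>a. a + 1 < n \<Longrightarrow> left_descent n a w \<Longrightarrow> left_descent n (a+1) w \<Longrightarrow> False"
  shows "admissible_elem n w"
proof -
  define p where "p = inv (perm_part n w)"
  have ps: "perm_part n w \<in> signed_perms n" using perm_part_signed_perms[OF w] .
  have pv: "pos_of n (neg_set n w) k = int k" if "1 \<le> k" "k \<le> n" for k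
    using pos_of_not_neg[of "{}" n k] that N0 by simp
  have st: "(k \<in> neg_set n w) = (k + 1 \<in> neg_set n w)" for k using N0 by simp
  have desk: "left_descent n k w \<longleftrightarrow> p (int k) > p (int k + 1)" if "1 \<le> k" "k < n" for k
    using left_descent_same_iff[OF w that st] pv[of k] that Des_inv_iff[OF ps that] unfolding p_def by simp
  have "avoids_321 n p"
  proof (rule avoids_321_if_descents)
    fix k
    assume k: "1 \<le> k" "k < n" "p (int k) > p (int k + 1)"
    then have "admissible_elem n (gen k \<circ> w)" using H1 desk by simp
    moreover have "neg_set n (gen k \<circ> w) = neg_set n w" "perm_part n (gen k \<circ> w) = gen k \<circ> perm_part n w"
      using gen_comp_same(3,4)[OF w k(1,2) st] pv[of k] k by auto
    ultimately show "avoids_321 n (p \<circ> gen k)"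
      unfolding admissible_elem_def admissible_def p_def using inv_gen_comp[OF ps] by simp
  next
    fix k
    assume "1 \<le> k" "k + 1 < n" "p (int k) > p (int k + 1)" "p (int k + 1) > p (int k + 2)"
    then show False using H2[of k] desk[of k] desk[of "k + 1"] by (simp add: add.commute add.left_commute)
  qed
  then show ?thesis unfolding admissible_elem_def admissible_def p_def using N0 by simp
qed

lemma neg_set_pair_not_Des_1:
  assumes w: "w \<in> signed_perms n" and N: "neg_set n w = {1, j}" "2 \<le> j"
    and D1: "1 \<in> Des_inv n (perm_part n w)"
    and H1: "\<And>a. a < n \<Longrightarrow> left_descent n a w \<Longrightarrow> admissible_elem n (gen a \<circ> w)"
    and H2: "\<And>a. a + 1 < n \<Longrightarrow> left_descent n a w \<Longrightarrow> left_descent n (a+1) w \<Longrightarrow> False"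
  shows False
proof -
  have jn: "j \<le> n" using N neg_set_subset[of n w] by auto
  have d0: "left_descent n 0 w" using left_descent_0_iff[OF w] N jn by simp
  show False
  proof (cases "j = 2")
    case True
    have k: "1 \<le> (1::nat)" "1 < n" using jn True by auto
    have "{i \<in> neg_set n w. i \<ge> 1 + 1} = {2}" using N True by auto
    then have "pos_of n (neg_set n w) 1 = 1" using pos_of_neg[OF neg_set_subset[of n w], of 1] N True by simp
    then have "left_descent n 1 w" using left_descent_same_iff[OF w k] N True D1 by simp
    then show False using H2[of 0] d0 k by simp
  next
    case False
    have k: "1 \<le> j - 1" "j - 1 < n" "j - 1 \<notin> neg_set n w" "j - 1 + 1 \<in> neg_set n w"
      using N False jn by auto
    have dk: "left_descent n (j - 1) w" using left_descent_mixed_iff[OF w k(1,2)] k by simp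
    have "neg_set n (gen (j - 1) \<circ> w) = insert (j - 1) (neg_set n w - {j - 1 + 1})"
      "perm_part n (gen (j - 1) \<circ> w) = perm_part n w"
      using gen_comp_mixed(1,2)[OF w k(1,2)] k(3,4) unfolding if_not_P[OF k(3)] by blast+
    then have C: "admissible n (insert (j - 1) (neg_set n w - {j - 1 + 1})) (perm_part n w)"
      using H1[OF k(2) dk] unfolding admissible_elem_def by simp
    have "j - 1 + 1 = j" "j \<noteq> 1" "j - 1 \<noteq> 1" using N(2) False by auto
    then have "insert (j - 1) (neg_set n w - {j - 1 + 1}) = {1, j - 1}" "card {1, j - 1} = 2"
      using N(1) by (auto simp: insert_commute)
    then show False using C D1 unfolding admissible_def by simp
  qed
qed


lemma admissible_elem_if_neg_1:
  assumes w: "w \<in> signed_perms n" and N1: "1 \<in> neg_set n w"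
    and H1: "\<And>a. a < n \<Longrightarrow> left_descent n a w \<Longrightarrow> admissible_elem n (gen a \<circ> w)"
    and H2: "\<And>a. a + 1 < n \<Longrightarrow> left_descent n a w \<Longrightarrow> left_descent n (a+1) w \<Longrightarrow> False"
  shows "admissible_elem n w"
proof -
  define N where "N = neg_set n w"
  have N: "N \<subseteq> {1..n}" unfolding N_def by (rule neg_set_subset)
  have fN: "finite N" using finite_subset[OF N] by simp
  have n1: "1 \<le> n" using N1 N unfolding N_def by auto
  have d0: "left_descent n 0 w" using left_descent_0_iff[OF w n1] N1 by simp
  have C0: "admissible n (N - {1}) (perm_part n w)"
    using H1[OF _ d0] n1 gen_0_comp(1,2)[OF w n1] N1 unfolding admissible_elem_def N_def by simp
  have sub: "N \<subseteq> {1..first_valley n (perm_part n w)}"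
    using C0 first_valley_ge_1[OF n1, of "perm_part n w"] unfolding admissible_def by auto
  have "card N \<le> 1" if D1: "1 \<in> Des_inv n (perm_part n w)"
  proof (rule ccontr)
    assume "\<not> card N \<le> 1"
    moreover have "card (N - {1}) \<le> 1" using C0 D1 unfolding admissible_def by simp
    ultimately have "card (N - {1}) = 1" using fN N1 unfolding N_def by (simp add: card_Diff_singleton)
    then obtain j where j: "N - {1} = {j}" by (rule card_1_singletonE)
    then have "j \<in> N" "j \<noteq> 1" by auto
    then have "2 \<le> j" using subsetD[OF N \<open>j \<in> N\<close>] by simp
    moreover have "neg_set n w = {1, j}" using j N1 unfolding N_def by auto
    ultimately show False by (intro neg_set_pair_not_Des_1[OF w _ _ D1 H1 H2])
  qed
  then show ?thesis using C0 sub unfolding admissible_elem_def admissible_def N_def by simp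
qed

lemma left_descent_below_singleton_neg:
  assumes w: "w \<in> signed_perms n" and N: "neg_set n w = {k + 1}" and k: "2 \<le> k" "k < n"
    and D: "int k \<in> Des_inv n (perm_part n w)"
  shows "left_descent n (k - 1) w"
proof -
  have k': "1 \<le> k - 1" "k - 1 < n" "k - 1 \<notin> neg_set n w" "k - 1 + 1 \<notin> neg_set n w"
    using k N by auto
  have "neg_set n w \<union> {1..k - 1} = insert (k + 1) {1..k - 1}" using N by auto
  then have "pos_of n (neg_set n w) (k - 1) = int k"
    using pos_of_not_neg[OF neg_set_subset k'(1) _ k'(3)] k by simp
  then show ?thesis using left_descent_same_iff[OF w k'(1,2)] k' D k by simp
qed

lemma admissible_elem_if_neg:
  assumes w: "w \<in> signed_perms n" and Nne: "neg_set n w \<noteq> {}" and N1: "1 \<notin> neg_set n w"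
    and H1: "\<And>a. a < n \<Longrightarrow> left_descent n a w \<Longrightarrow> admissible_elem n (gen a \<circ> w)"
    and H2: "\<And>a. a + 1 < n \<Longrightarrow> left_descent n a w \<Longrightarrow> left_descent n (a+1) w \<Longrightarrow> False"
  shows "admissible_elem n w"
proof -
  define N where "N = neg_set n w"
  define \<pi> where "\<pi> = perm_part n w"
  have N: "N \<subseteq> {1..n}" unfolding N_def by (rule neg_set_subset)
  have fN: "finite N" using finite_subset[OF N] by simp
  obtain k where k: "1 \<le> k" "k < n" "k \<notin> N" "k + 1 \<in> N" "\<forall>j\<in>N. k < j"
    using Min_neg_set_pred[OF Nne N1] unfolding N_def by blast
  have dk: "left_descent n k w" using left_descent_mixed_iff[OF w k(1,2)] k unfolding N_def by simp
  have C1: "admissible n (insert k (N - {k+1})) \<pi>"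
    using H1[OF k(2) dk] gen_comp_mixed(1,2)[OF w k(1,2)] k unfolding admissible_elem_def N_def \<pi>_def by simp
  have sub: "N \<subseteq> {1..first_valley n \<pi>}"
  proof
    fix j
    assume jN: "j \<in> N"
    show "j \<in> {1..first_valley n \<pi>}"
    proof (cases "j = k + 1")
      case False
      then show ?thesis using jN C1 unfolding admissible_def by auto
    next
      case True
      consider j' where "j' \<in> N" "j' \<noteq> k + 1" | "N = {k + 1}" using k(4) by blast
      then show ?thesis
      proof cases
        case 1
        then have "j' \<le> first_valley n \<pi>" using C1 unfolding admissible_def by auto
        then show ?thesis using True 1(1) k(5) N by force
      next
        case 2
        have kv: "k \<le> first_valley n \<pi>" using C1 unfolding admissible_def by auto
        show ?thesis
        proof (rule ccontr)
          assume "j \<notin> {1..first_valley n \<pi>}"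
          then have v: "first_valley n \<pi> = k" using kv True by auto
          then have "int k \<in> Des_inv n \<pi>" "2 \<le> k" using first_valley_Des[of n \<pi>] k(2) by auto
          then have "left_descent n (k - 1) w"
            using left_descent_below_singleton_neg[OF w _ _ k(2)] 2 unfolding N_def \<pi>_def by simp
          then show False using H2[of "k - 1"] dk k \<open>2 \<le> k\<close> by simp
        qed
      qed
    qed
  qed
  moreover have "card (insert k (N - {k+1})) = card N" using card_insert_Diff_swap[OF fN k(3,4)] .
  ultimately show ?thesis using C1 unfolding admissible_elem_def admissible_def N_def \<pi>_def by simp
qed

lemma admissible_elem_if_descents:
  assumes w: "w \<in> signed_perms n"
    and H1: "\<And>a. a < n \<Longrightarrow> left_descent n a w \<Longrightarrow> admissible_elem n (gen a \<circ> w)"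
    and H2: "\<And>a. a + 1 < n \<Longrightarrow> left_descent n a w \<Longrightarrow> left_descent n (a+1) w \<Longrightarrow> False"
  shows "admissible_elem n w"
proof (cases "neg_set n w = {}")
  case True
  show ?thesis by (rule admissible_elem_if_no_neg[OF w True H1 H2])
next
  case False
  show ?thesis
  proof (cases "1 \<in> neg_set n w")
    case True
    show ?thesis by (rule admissible_elem_if_neg_1[OF w True H1 H2])
  next
    case not1: False
    show ?thesis by (rule admissible_elem_if_neg[OF w False not1 H1 H2])
  qed
qed

lemma FC_B_iff_admissible:
  assumes "w \<in> signed_perms n"
  shows "w \<in> FC_B n \<longleftrightarrow> admissible_elem n w"
  using assms
proof (rule FC_B_iff_descent_recursive)
  fix w a
  assume w: "w \<in> signed_perms n" "admissible_elem n w"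
  show "a < n \<Longrightarrow> left_descent n a w \<Longrightarrow> admissible_elem n (gen a \<circ> w)"
    using w by (rule admissible_elem_left_descent)
  show "a + 1 < n \<Longrightarrow> left_descent n a w \<Longrightarrow> left_descent n (a + 1) w \<Longrightarrow> False"
    using w by (rule admissible_elem_no_adjacent_descents)
next
  fix w
  assume "w \<in> signed_perms n"
    "\<And>a. a < n \<Longrightarrow> left_descent n a w \<Longrightarrow> admissible_elem n (gen a \<circ> w)"
    "\<And>a. a + 1 < n \<Longrightarrow> left_descent n a w \<Longrightarrow> left_descent n (a + 1) w \<Longrightarrow> False"
  then show "admissible_elem n w" by (rule admissible_elem_if_descents)
qed

section \<open>The decomposition of \<open>FC(B\<^sub>n)\<close>\<close>

lemma admissible_elem_unsigned:
  "\<pi> \<in> unsigned_perms n \<Longrightarrow> admissible_elem n \<pi> \<longleftrightarrow> avoids_321 n (inv \<pi>)"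
  using perm_part_unsigned[of \<pi> n] unfolding admissible_elem_def admissible_def by simp

lemma FC_S_eq: "FC_S n = {\<pi> \<in> unsigned_perms n. avoids_321 n (inv \<pi>)}"
proof -
  have "FC_S n = FC_B n \<inter> unsigned_perms n"
    unfolding FC_S_def unsigned_perms_def FC_B_def by auto
  then show ?thesis
    using FC_B_iff_admissible admissible_elem_unsigned unsigned_perms_signed by auto
qed

lemma subsets_card_le_1:
  assumes "finite A"
  shows "{S. S \<subseteq> A \<and> card S \<le> 1} = insert {} ((\<lambda>i. {i}) ` A)"
proof -
  have "S = {} \<or> (\<exists>i\<in>A. S = {i})" if S: "S \<subseteq> A" "card S \<le> 1" for S
  proof (cases "card S = 0")
    case True
    then show ?thesis using finite_subset[OF S(1) assms] by simp
  next
    case False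
    then obtain i where "S = {i}" using S(2) by (metis card_1_singletonE le_Suc_eq le_zero_eq One_nat_def)
    then show ?thesis using S(1) by simp
  qed
  then show ?thesis by auto
qed

lemma B_pi_eq:
  "B_pi n \<pi> = delta_prod n ` {S. S \<subseteq> {1..first_valley n \<pi>} \<and> (1 \<in> Des_inv n \<pi> \<longrightarrow> card S \<le> 1)}"
proof -
  define v where "v = first_valley n \<pi>"
  have fold: "foldr (\<lambda>i f. (if i \<in> S then delta i else id) \<circ> f) [1..<v+1] id = delta_prod n S"
    if "S \<subseteq> {1..v}" for S
    using foldr_delta_eq_delta_prod[OF that] first_valley_le unfolding v_def by blast
  show ?thesis
  proof (cases "1 \<in> Des_inv n \<pi>")
    case False
    have "{foldr (\<lambda>i f. (if i \<in> S then delta i else id) \<circ> f) [1..<v+1] id | S. S \<subseteq> {1..v}}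
        = delta_prod n ` {S. S \<subseteq> {1..v}}"
      unfolding setcompr_eq_image by (rule image_cong[OF refl fold]) simp
    then show ?thesis using False unfolding B_pi_def Let_def v_def[symmetric] by simp
  next
    case True
    have "delta ` {1..v} = (\<lambda>i. delta_prod n {i}) ` {1..v}"
      using delta_eq_delta_prod first_valley_le[of n \<pi>] unfolding v_def by (intro image_cong) auto
    then show ?thesis
      using True subsets_card_le_1[of "{1..v}"] delta_prod_empty
      unfolding B_pi_def Let_def v_def[symmetric] by (simp add: image_image)
  qed
qed

lemma FC_B_eq_Union: "FC_B n = (\<Union>\<pi>\<in>FC_S n. (\<lambda>\<mu>. \<mu> \<circ> \<pi>) ` B_pi n \<pi>)"
proof (intro equalityI subsetI)
  fix w
  assume "w \<in> FC_B n"
  then have w: "w \<in> signed_perms n" "admissible n (neg_set n w) (perm_part n w)"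
    using FC_B_iff_admissible unfolding FC_B_def admissible_elem_def by auto
  then have "perm_part n w \<in> FC_S n"
    using delta_prod_factorization(1) unfolding FC_S_eq admissible_def by auto
  moreover have "delta_prod n (neg_set n w) \<in> B_pi n (perm_part n w)"
    using w(2) unfolding B_pi_eq admissible_def by auto
  ultimately show "w \<in> (\<Union>\<pi>\<in>FC_S n. (\<lambda>\<mu>. \<mu> \<circ> \<pi>) ` B_pi n \<pi>)"
    using delta_prod_factorization(2)[OF w(1)] by (metis (no_types, lifting) UN_I image_eqI)
next
  fix w
  assume "w \<in> (\<Union>\<pi>\<in>FC_S n. (\<lambda>\<mu>. \<mu> \<circ> \<pi>) ` B_pi n \<pi>)"
  then obtain \<pi> S where \<pi>: "\<pi> \<in> unsigned_perms n" "avoids_321 n (inv \<pi>)"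
    and S: "S \<subseteq> {1..first_valley n \<pi>}" "1 \<in> Des_inv n \<pi> \<longrightarrow> card S \<le> 1"
    and w: "w = delta_prod n S \<circ> \<pi>"
    unfolding FC_S_eq B_pi_eq by auto
  have Sn: "S \<subseteq> {1..n}" using S(1) first_valley_le[of n \<pi>] by auto
  have "w \<in> signed_perms n"
    using w signed_perms_comp[OF delta_prod_props(1)[OF Sn] unsigned_perms_signed[OF \<pi>(1)]] by simp
  moreover have "admissible_elem n w"
    using delta_prod_factorization_unique[OF Sn \<pi>(1)] \<pi> S w unfolding admissible_elem_def admissible_def by simp
  ultimately show "w \<in> FC_B n" using FC_B_iff_admissible by blast
qed

lemma perm_part_B_pi_coset:
  assumes "\<pi> \<in> unsigned_perms n" "\<mu> \<in> B_pi n \<pi>"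
  shows "perm_part n (\<mu> \<circ> \<pi>) = \<pi>"
proof -
  obtain S where S: "S \<subseteq> {1..first_valley n \<pi>}" "\<mu> = delta_prod n S"
    using assms(2) unfolding B_pi_eq by blast
  then have "S \<subseteq> {1..n}" using first_valley_le[of n \<pi>] by auto
  then show ?thesis using delta_prod_factorization_unique(2)[OF _ assms(1)] S(2) by simp
qed

lemma B_pi_cosets_disjoint:
  assumes "\<pi> \<in> FC_S n" "\<pi>' \<in> FC_S n" "\<pi> \<noteq> \<pi>'"
  shows "(\<lambda>\<mu>. \<mu> \<circ> \<pi>) ` B_pi n \<pi> \<inter> (\<lambda>\<mu>. \<mu> \<circ> \<pi>') ` B_pi n \<pi>' = {}"
proof (rule equals0I)
  fix x
  assume "x \<in> (\<lambda>\<mu>. \<mu> \<circ> \<pi>) ` B_pi n \<pi> \<inter> (\<lambda>\<mu>. \<mu> \<circ> \<pi>') ` B_pi n \<pi>'"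
  then obtain \<mu> \<mu>' where \<mu>: "\<mu> \<in> B_pi n \<pi>" "\<mu>' \<in> B_pi n \<pi>'" and x: "x = \<mu> \<circ> \<pi>" "x = \<mu>' \<circ> \<pi>'"
    by blast
  have "\<pi> \<in> unsigned_perms n" "\<pi>' \<in> unsigned_perms n" using assms(1,2) unfolding FC_S_eq by auto
  then have "perm_part n (\<mu> \<circ> \<pi>) = \<pi>" "perm_part n (\<mu>' \<circ> \<pi>') = \<pi>'"
    using \<mu> by (simp_all add: perm_part_B_pi_coset)
  then show False using assms(3) x by simp
qed

theorem mainTheorem4:
  fixes n :: nat
  assumes "n \<ge> 2"
  shows "FC_B n = (\<Union>\<pi>\<in>FC_S n. (\<lambda>\<mu>. \<mu> \<circ> \<pi>) ` B_pi n \<pi>)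
    \<and> (\<forall>\<pi>\<in>FC_S n. \<forall>\<pi>'\<in>FC_S n. \<pi> \<noteq> \<pi>' \<longrightarrow>
          ((\<lambda>\<mu>. \<mu> \<circ> \<pi>) ` B_pi n \<pi>) \<inter> ((\<lambda>\<mu>. \<mu> \<circ> \<pi>') ` B_pi n \<pi>') = {})"
  using FC_B_eq_Union B_pi_cosets_disjoint by blast

end
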